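(* Suppose $\mathfrak{c}^{\mathrm{cone}}_{d-1}<\infty$, and let $C\subset\mathbb{R}^d$ be a simplicial rational $d$-cone with extreme integral generators $v_1,\dots,v_d$. Then: (a) there is a system of unimodular subcones $C_1,\dots,C_k\subset C$ covering the corner of $C$ at $v_1$ such that $\mathrm{Hilb}(C_j)\subset(\mathfrak{c}^{\mathrm{cone}}_{d-1}+1)\Delta_C$ for all $j\in[1,k]$; (b) moreover, each element $w\ne v_1$ of $\mathrm{Hilb}(C_j)$, $j\in[1,k]$, has a representation $w=\xi_1v_1+\dots+\xi_dv_d$ with $\xi_1<1$.
   Context: Cones are polyhedral, rational, pointed; $\mathrm{Hilb}(C)$ is the minimal generating set of $C\cap\mathbb{Z}^d$; extreme integral generators are the primitive lattice vectors on the edges; $\Delta_C=\mathrm{conv}(O,\text{extreme integral generators})$. A unimodular cone is a simplicial cone $D$ whose extreme integral generators generate a direct summand of $\mathbb{Z}^d$ (equivalently $\Delta_D$ is a unimodular simplex). For an extreme generator $v$ of $C$, a system of subcones $C_1,\dots,C_k\subset C$ covers the corner of $C$ at $v$ if $v\in\mathrm{Hilb}(C_j)$ for all $j$ and $\bigcup_j C_j$ contains a neighborhood of $v$ in $C$. $\mathfrak{c}_{e}^{\mathrm{cone}}$ is the infimum of natural $c$ such that every rational $e$-dimensional cone $C\subset\mathbb{R}^e$ admits a unimodular cover $C=\bigcup_j C_j$ (finite family of unimodular cones with union $C$) with $\mathrm{Hilb}(C_j)\subset c\Delta_C$; since the notion is invariant under lattice isomorphisms, it applies to cones in any rank-$e$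 lattice. *)

theory Defs
  imports Complex_Main "HOL-Library.Extended_Nat"
begin

text \<open>Points of R^d are modelled as functions nat => real vanishing at all
coordinates >= d; the lattice Z^d consists of those with integral coordinates.
All linear operations are written coordinatewise.\<close>

type_synonym vec = "nat \<Rightarrow> real"

definition space :: "nat \<Rightarrow> vec set" where
  "space d = {x. \<forall>i\<ge>d. x i = 0}"

definition lattice :: "nat \<Rightarrow> vec set" where
  "lattice d = {x \<in> space d. \<forall>i. x i \<in> \<int>}"

definition smul :: "real \<Rightarrow> vec \<Rightarrow> vec" where
  "smul t x = (\<lambda>i. t * x i)"

definition pos_hull :: "vec set \<Rightarrow> vec set" where
  "pos_hull S = {(\<lambda>i. \<Sum>v\<in>T. c v * v i) | T c. finite T \<and> T \<subseteq> S \<and> (\<forall>v\<in>T. c v \<ge> 0)}"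

definition lin_span :: "vec set \<Rightarrow> vec set" where
  "lin_span S = {(\<lambda>i. \<Sum>v\<in>T. c v * v i) | T c. finite T \<and> T \<subseteq> S}"

definition int_span :: "vec set \<Rightarrow> vec set" where
  "int_span S = {(\<lambda>i. \<Sum>v\<in>T. c v * v i) | T c. finite T \<and> T \<subseteq> S \<and> (\<forall>v\<in>T. c v \<in> \<int>)}"

definition lin_indep :: "vec set \<Rightarrow> bool" where
  "lin_indep S \<longleftrightarrow> (\<forall>T c. finite T \<and> T \<subseteq> S \<and> (\<lambda>i. \<Sum>v\<in>T. c v * v i) = (\<lambda>i. 0)
                      \<longrightarrow> (\<forall>v\<in>T. c v = 0))"

definition rational_cone :: "nat \<Rightarrow> vec set \<Rightarrow> bool" where
  "rational_cone d C \<longleftrightarrow>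
     (\<exists>S. finite S \<and> S \<subseteq> lattice d \<and> C = pos_hull S) \<and>
     (\<forall>x. x \<in> C \<and> smul (-1) x \<in> C \<longrightarrow> x = (\<lambda>i. 0))"

definition full_dim :: "nat \<Rightarrow> vec set \<Rightarrow> bool" where
  "full_dim d C \<longleftrightarrow> space d \<subseteq> lin_span C"

definition extreme_ray :: "vec set \<Rightarrow> vec \<Rightarrow> bool" where
  "extreme_ray C v \<longleftrightarrow> v \<in> C \<and> v \<noteq> (\<lambda>i. 0) \<and>
     (\<forall>x\<in>C. \<forall>y\<in>C. (\<exists>t\<ge>0. (\<lambda>i. x i + y i) = smul t v) \<longrightarrow>
         (\<exists>s\<ge>0. x = smul s v) \<and> (\<exists>s\<ge>0. y = smul s v))"

definition ext_gens :: "nat \<Rightarrow> vec set \<Rightarrow> vec set" where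
  "ext_gens d C = {v \<in> lattice d. extreme_ray C v \<and>
                     (\<forall>t. 0 < t \<and> t < 1 \<longrightarrow> smul t v \<notin> lattice d)}"

text \<open>Hilbert basis: the minimal generating set of the monoid C \<inter> Z^d, which for
pointed cones is the set of its irreducible (nonzero, indecomposable) elements.\<close>
definition hilb :: "nat \<Rightarrow> vec set \<Rightarrow> vec set" where
  "hilb d C = {x \<in> C \<inter> lattice d. x \<noteq> (\<lambda>i. 0) \<and>
     \<not> (\<exists>y\<in>C \<inter> lattice d. \<exists>z\<in>C \<inter> lattice d. y \<noteq> (\<lambda>i. 0) \<and> z \<noteq> (\<lambda>i. 0) \<and>
          x = (\<lambda>i. y i + z i))}"

definition convex_hull_v :: "vec set \<Rightarrow> vec set" where
  "convex_hull_v S = {(\<lambda>i. \<Sum>v\<in>T. c v * v i) | T c. finite T \<and> T \<subseteq> S \<and>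
        (\<forall>v\<in>T. c v \<ge> 0) \<and> (\<Sum>v\<in>T. c v) = 1}"

definition Delta :: "nat \<Rightarrow> vec set \<Rightarrow> vec set" where
  "Delta d C = convex_hull_v (insert (\<lambda>i. 0) (ext_gens d C))"

definition scale_set :: "real \<Rightarrow> vec set \<Rightarrow> vec set" where
  "scale_set c A = smul c ` A"

definition simplicial :: "nat \<Rightarrow> vec set \<Rightarrow> bool" where
  "simplicial d C \<longleftrightarrow> rational_cone d C \<and> lin_indep (ext_gens d C)"

text \<open>Unimodular cone: simplicial, extreme integral generators generate a direct
summand of Z^d (i.e. lattice points of their real span are integral combinations).\<close>
definition unimodular :: "nat \<Rightarrow> vec set \<Rightarrow> bool" where
  "unimodular d D \<longleftrightarrow> simplicial d D \<and>
     lattice d \<inter> lin_span (ext_gens d D) \<subseteq> int_span (ext_gens d D)"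

definition cone_const_ok :: "nat \<Rightarrow> nat \<Rightarrow> bool" where
  "cone_const_ok e c \<longleftrightarrow> (\<forall>C. rational_cone e C \<and> full_dim e C \<longrightarrow>
      (\<exists>\<C>. finite \<C> \<and> (\<forall>D\<in>\<C>. unimodular e D) \<and> \<Union>\<C> = C \<and>
           (\<forall>D\<in>\<C>. hilb e D \<subseteq> scale_set (real c) (Delta e C))))"

text \<open>The constant c_e^cone, with value infinity when no such c exists.\<close>
definition cone_const :: "nat \<Rightarrow> enat" where
  "cone_const e = Inf (enat ` {c. cone_const_ok e c})"

definition covers_corner :: "nat \<Rightarrow> vec set \<Rightarrow> vec \<Rightarrow> vec set set \<Rightarrow> bool" where
  "covers_corner d C v \<C> \<longleftrightarrow> (\<forall>D\<in>\<C>. D \<subseteq> C \<and> v \<in> hilb d D) \<and>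
     (\<exists>\<epsilon>>0. \<forall>x\<in>C. (\<forall>i<d. \<bar>x i - v i\<bar> < \<epsilon>) \<longrightarrow> x \<in> \<Union>\<C>)"

end

(*
  A lattice automorphism moves v_1 (written v 0: generators are indexed from 0) to the last
  unit vector; dropping the last coordinate then projects C along v_1 onto a rational
  (d-1)-cone C'. By definition of c = c_(d-1)^cone, C' has a unimodular cover by cones D with
  Hilb(D) in c Delta(C'), and Delta(C') lies in the projection of Delta(C). Every extreme
  generator of such a D is the image of a lattice point w = xi_1 v_1 + ... + xi_d v_d with
  0 <= xi_1 < 1 and xi_1 + ... + xi_d <= c + 1. Together with v_1 these lifts span a
  unimodular cone whose Hilbert basis is its set of generators, which gives (a) and (b). The
  lifted cones cover a neighbourhood of v_1 in C because near v_1 the coefficients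
  xi_2, ..., xi_d are small while the v_1-coordinate is close to 1.
*)

theory Submission
  imports Defs "HOL-Combinatorics.Transposition"
begin

section \<open>Finite linear combinations\<close>

abbreviation vzero :: vec where "vzero \<equiv> (\<lambda>i. 0)"

definition lincomb :: "'a set \<Rightarrow> ('a \<Rightarrow> real) \<Rightarrow> ('a \<Rightarrow> vec) \<Rightarrow> vec" where
  "lincomb I a w = (\<lambda>i. \<Sum>j\<in>I. a j * w j i)"

lemma lincomb_apply: "lincomb I a w i = (\<Sum>j\<in>I. a j * w j i)"
  by (simp add: lincomb_def)

lemma lincomb_empty [simp]: "lincomb {} a w = vzero"
  by (simp add: lincomb_def)

lemma lincomb_insert:
  "finite I \<Longrightarrow> j \<notin> I \<Longrightarrow> lincomb (insert j I) a w = (\<lambda>i. a j * w j i + lincomb I a w i)"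
  by (simp add: lincomb_def)

lemma lincomb_add: "(\<lambda>i. lincomb I a w i + lincomb I b w i) = lincomb I (\<lambda>j. a j + b j) w"
  by (simp add: lincomb_def sum.distrib algebra_simps)

lemma lincomb_diff: "(\<lambda>i. lincomb I a w i - lincomb I b w i) = lincomb I (\<lambda>j. a j - b j) w"
  by (simp add: lincomb_def sum_subtractf algebra_simps)

lemma lincomb_smul: "smul t (lincomb I a w) = lincomb I (\<lambda>j. t * a j) w"
  by (simp add: lincomb_def smul_def sum_distrib_left algebra_simps)

lemma lincomb_cong:
  "(\<And>j i. j \<in> I \<Longrightarrow> a j * w j i = b j * u j i) \<Longrightarrow> lincomb I a w = lincomb I b u"
  unfolding lincomb_def by (rule ext, rule sum.cong, auto)

lemma lincomb_extend:
  "finite S \<Longrightarrow> T \<subseteq> S \<Longrightarrow> lincomb T a w = lincomb S (\<lambda>j. if j \<in> T then a j else 0) w"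
  unfolding lincomb_def by (rule ext, rule sum.mono_neutral_cong_left, auto)

lemma lincomb_reindex: "inj_on f I \<Longrightarrow> lincomb (f ` I) a w = lincomb I (a \<circ> f) (w \<circ> f)"
  unfolding lincomb_def by (rule ext) (simp add: sum.reindex)

lemma lincomb_single:
  assumes "finite G" "g \<in> G" "\<And>h. h \<in> G \<Longrightarrow> h \<noteq> g \<Longrightarrow> a h = 0"
  shows "lincomb G a w = smul (a g) (w g)"
proof -
  have "lincomb {g} a w = lincomb G (\<lambda>j. if j \<in> {g} then a j else 0) w"
    by (rule lincomb_extend) (use assms in auto)
  also have "\<dots> = lincomb G a w" by (rule lincomb_cong) (use assms in auto)
  finally show ?thesis by (simp add: lincomb_def smul_def)
qed

lemma lincomb_swap:
  "finite T \<Longrightarrow> finite I \<Longrightarrow>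
   lincomb T lam (\<lambda>t. lincomb I (mu t) w) = lincomb I (\<lambda>j. \<Sum>t\<in>T. lam t * mu t j) w"
  unfolding lincomb_def
  by (rule ext) (simp add: sum_distrib_left sum_distrib_right mult.assoc sum.swap[of _ T I])

lemma lincomb_closed:
  assumes "finite I" "\<And>j. j \<in> I \<Longrightarrow> P (a j)" "\<And>j. j \<in> I \<Longrightarrow> w j \<in> K"
    "vzero \<in> K" "\<And>x y. x \<in> K \<Longrightarrow> y \<in> K \<Longrightarrow> (\<lambda>i. x i + y i) \<in> K"
    "\<And>t x. P t \<Longrightarrow> x \<in> K \<Longrightarrow> smul t x \<in> K"
  shows "lincomb I a w \<in> K"
  using assms
proof (induction I rule: finite_induct)
  case empty
  then show ?case by simp
next
  case (insert j I)
  have "(\<lambda>i. smul (a j) (w j) i + lincomb I a w i) \<in> K"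
    using insert by simp
  moreover have "lincomb (insert j I) a w = (\<lambda>i. smul (a j) (w j) i + lincomb I a w i)"
    using insert by (simp add: lincomb_insert smul_def)
  ultimately show ?case by simp
qed

lemma lincomb_in_convex_hull_insert_zero:
  assumes fin: "finite I" and inj: "inj_on w I" and nz: "vzero \<notin> w ` I"
    and lam: "\<forall>j\<in>I. 0 \<le> lam j" "(\<Sum>j\<in>I. lam j) \<le> 1"
  shows "lincomb I lam w \<in> convex_hull_v (insert vzero (w ` I))"
proof -
  let ?T = "insert vzero (w ` I)"
  define c where "c t = (if t = vzero then 1 - (\<Sum>j\<in>I. lam j) else lam (the_inv_into I w t))" for t
  have cw: "c (w j) = lam j" if "j \<in> I" for j
  proof -
    have "w j \<noteq> vzero" using nz that by (metis imageI)
    then show ?thesis using that inj by (simp add: c_def the_inv_into_f_f)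
  qed
  have "(\<Sum>t\<in>?T. c t) = c vzero + (\<Sum>j\<in>I. c (w j))"
    using nz fin by (simp add: sum.reindex[OF inj])
  then have "(\<Sum>t\<in>?T. c t) = 1" using cw by (simp add: c_def)
  moreover have "\<forall>t\<in>?T. 0 \<le> c t" using lam cw by (auto simp: c_def)
  moreover have "lincomb I lam w = lincomb ?T c (\<lambda>u. u)"
  proof -
    have "lincomb ?T c (\<lambda>u. u) = lincomb (w ` I) c (\<lambda>u. u)"
      using lincomb_insert[of "w ` I" vzero c "\<lambda>u. u"] fin nz by simp
    also have "\<dots> = lincomb I lam w"
      using lincomb_reindex[OF inj, of c "\<lambda>u. u"] cw by (simp add: comp_def cong: lincomb_cong)
    finally show ?thesis by simp
  qed
  ultimately show ?thesis
    unfolding convex_hull_v_def lincomb_def using fin by blast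
qed

section \<open>Spans with coefficients in a subsemiring of the reals\<close>

definition coeff_span :: "(real \<Rightarrow> bool) \<Rightarrow> vec set \<Rightarrow> vec set" where
  "coeff_span P S = {lincomb T c (\<lambda>v. v) | T c. finite T \<and> T \<subseteq> S \<and> (\<forall>v\<in>T. P (c v))}"

lemma pos_hull_coeff_span: "pos_hull = coeff_span (\<lambda>t. 0 \<le> t)"
  unfolding pos_hull_def coeff_span_def lincomb_def by (rule ext) simp

lemma lin_span_coeff_span: "lin_span = coeff_span (\<lambda>_. True)"
  unfolding lin_span_def coeff_span_def lincomb_def by (rule ext) simp

lemma int_span_coeff_span: "int_span = coeff_span (\<lambda>t. t \<in> \<int>)"
  unfolding int_span_def coeff_span_def lincomb_def by (rule ext) simp

locale real_subsemiring =
  fixes P :: "real \<Rightarrow> bool"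
  assumes P_0: "P 0" and P_1: "P 1"
    and P_add: "P s \<Longrightarrow> P t \<Longrightarrow> P (s + t)" and P_mult: "P s \<Longrightarrow> P t \<Longrightarrow> P (s * t)"
begin

lemma span_finite_coeffs:
  assumes "finite S" "x \<in> coeff_span P S"
  shows "\<exists>c. (\<forall>v\<in>S. P (c v)) \<and> x = lincomb S c (\<lambda>v. v)"
proof -
  obtain T c where T: "finite T" "T \<subseteq> S" "\<forall>v\<in>T. P (c v)" "x = lincomb T c (\<lambda>v. v)"
    using assms(2) unfolding coeff_span_def by auto
  show ?thesis
    using T lincomb_extend[OF assms(1) T(2)] P_0
    by (auto intro!: exI[of _ "\<lambda>j. if j \<in> T then c j else 0"])
qed

lemma span_zero: "vzero \<in> coeff_span P S"
  unfolding coeff_span_def by (auto intro!: exI[of _ "{}"])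

lemma span_add:
  assumes "x \<in> coeff_span P S" "y \<in> coeff_span P S"
  shows "(\<lambda>i. x i + y i) \<in> coeff_span P S"
proof -
  obtain T1 c1 where 1: "finite T1" "T1 \<subseteq> S" "\<forall>v\<in>T1. P (c1 v)" "x = lincomb T1 c1 (\<lambda>v. v)"
    using assms(1) unfolding coeff_span_def by auto
  obtain T2 c2 where 2: "finite T2" "T2 \<subseteq> S" "\<forall>v\<in>T2. P (c2 v)" "y = lincomb T2 c2 (\<lambda>v. v)"
    using assms(2) unfolding coeff_span_def by auto
  have fin: "finite (T1 \<union> T2)" using 1 2 by simp
  obtain a1 where a1: "\<forall>v\<in>T1 \<union> T2. P (a1 v)" "x = lincomb (T1 \<union> T2) a1 (\<lambda>v. v)"
    by (rule that[of "\<lambda>j. if j \<in> T1 then c1 j else 0"])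
      (use 1 lincomb_extend[OF fin, of T1 c1] P_0 in auto)
  obtain a2 where a2: "\<forall>v\<in>T1 \<union> T2. P (a2 v)" "y = lincomb (T1 \<union> T2) a2 (\<lambda>v. v)"
    by (rule that[of "\<lambda>j. if j \<in> T2 then c2 j else 0"])
      (use 2 lincomb_extend[OF fin, of T2 c2] P_0 in auto)
  have "(\<lambda>i. x i + y i) = lincomb (T1 \<union> T2) (\<lambda>v. a1 v + a2 v) (\<lambda>v. v)"
    unfolding a1(2) a2(2) by (rule lincomb_add)
  then show ?thesis
    unfolding coeff_span_def using fin 1(2) 2(2) a1(1) a2(1) P_add by blast
qed

lemma span_smul:
  assumes "x \<in> coeff_span P S" "P t"
  shows "smul t x \<in> coeff_span P S"
proof -
  obtain T c where T: "finite T" "T \<subseteq> S" "\<forall>v\<in>T. P (c v)" "x = lincomb T c (\<lambda>v. v)"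
    using assms(1) unfolding coeff_span_def by auto
  then show ?thesis
    unfolding coeff_span_def using assms(2) P_mult by (auto simp: lincomb_smul intro!: exI[of _ T])
qed

lemma span_base: "x \<in> S \<Longrightarrow> x \<in> coeff_span P S"
  unfolding coeff_span_def
  by (rule CollectI, rule exI[of _ "{x}"], rule exI[of _ "\<lambda>_. 1"]) (auto simp: lincomb_def P_1)

lemma span_lincomb:
  "finite I \<Longrightarrow> (\<And>j. j \<in> I \<Longrightarrow> P (a j)) \<Longrightarrow> (\<And>j. j \<in> I \<Longrightarrow> w j \<in> coeff_span P S)
   \<Longrightarrow> lincomb I a w \<in> coeff_span P S"
  by (rule lincomb_closed[where P=P]) (auto intro: span_zero span_add span_smul)

lemma span_trans: "S \<subseteq> coeff_span P T \<Longrightarrow> coeff_span P S \<subseteq> coeff_span P T"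
  unfolding coeff_span_def[of P S] by (auto intro!: span_lincomb)

lemma span_mono: "S \<subseteq> T \<Longrightarrow> coeff_span P S \<subseteq> coeff_span P T"
  by (rule span_trans) (auto intro: span_base)

end

interpretation nonneg: real_subsemiring "\<lambda>t. 0 \<le> t"
  by unfold_locales simp_all

interpretation reals: real_subsemiring "\<lambda>_. True"
  by unfold_locales simp_all

interpretation ints: real_subsemiring "\<lambda>t. t \<in> \<int>"
  by unfold_locales simp_all

lemmas pos_hull_finite_coeffs = nonneg.span_finite_coeffs[folded pos_hull_coeff_span]
lemmas pos_hull_zero = nonneg.span_zero[folded pos_hull_coeff_span]
lemmas pos_hull_add = nonneg.span_add[folded pos_hull_coeff_span]
lemmas pos_hull_smul = nonneg.span_smul[folded pos_hull_coeff_span]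
lemmas pos_hull_base = nonneg.span_base[folded pos_hull_coeff_span]
lemmas pos_hull_lincomb = nonneg.span_lincomb[folded pos_hull_coeff_span]
lemmas pos_hull_trans = nonneg.span_trans[folded pos_hull_coeff_span]
lemmas pos_hull_mono = nonneg.span_mono[folded pos_hull_coeff_span]

lemmas lin_span_finite_coeffs = reals.span_finite_coeffs[folded lin_span_coeff_span, simplified]
lemmas lin_span_base = reals.span_base[folded lin_span_coeff_span]
lemmas lin_span_lincomb = reals.span_lincomb[folded lin_span_coeff_span, simplified]
lemmas lin_span_trans = reals.span_trans[folded lin_span_coeff_span]

lemmas int_span_finite_coeffs = ints.span_finite_coeffs[folded int_span_coeff_span]
lemmas int_span_base = ints.span_base[folded int_span_coeff_span]
lemmas int_span_lincomb = ints.span_lincomb[folded int_span_coeff_span]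

lemma pos_hull_subset_lin_span: "pos_hull S \<subseteq> lin_span S"
  unfolding pos_hull_def lin_span_def by blast

lemma lin_indep_iff_lincomb:
  "lin_indep S \<longleftrightarrow>
     (\<forall>T c. finite T \<and> T \<subseteq> S \<and> lincomb T c (\<lambda>v. v) = vzero \<longrightarrow> (\<forall>v\<in>T. c v = 0))"
  unfolding lin_indep_def lincomb_def by simp

lemma lin_indep_finite_iff:
  assumes "finite G"
  shows "lin_indep G \<longleftrightarrow> (\<forall>c. lincomb G c (\<lambda>v. v) = vzero \<longrightarrow> (\<forall>g\<in>G. c g = 0))"
proof
  assume "lin_indep G"
  then show "\<forall>c. lincomb G c (\<lambda>v. v) = vzero \<longrightarrow> (\<forall>g\<in>G. c g = 0)"
    using assms unfolding lin_indep_iff_lincomb by blast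
next
  assume G: "\<forall>c. lincomb G c (\<lambda>v. v) = vzero \<longrightarrow> (\<forall>g\<in>G. c g = 0)"
  show "lin_indep G"
    unfolding lin_indep_iff_lincomb
  proof (intro allI impI ballI)
    fix T c v assume T: "finite T \<and> T \<subseteq> G \<and> lincomb T c (\<lambda>v. v) = vzero" and v: "v \<in> T"
    have "lincomb G (\<lambda>j. if j \<in> T then c j else 0) (\<lambda>v. v) = vzero"
      using lincomb_extend[OF assms, of T c "\<lambda>v. v"] T by simp
    then show "c v = 0" using G v T by fastforce
  qed
qed

lemma lin_indep_coeffs_unique:
  assumes "lin_indep S" "finite S" "lincomb S a (\<lambda>v. v) = lincomb S b (\<lambda>v. v)" "x \<in> S"
  shows "a x = b x"
proof -
  have "lincomb S (\<lambda>j. a j - b j) (\<lambda>v. v) = vzero"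
    using assms(3) lincomb_diff[of S a "\<lambda>v. v" b] by (metis diff_self)
  then show ?thesis using assms unfolding lin_indep_iff_lincomb by fastforce
qed

lemma lin_indep_image_coeffs_unique:
  assumes "lin_indep (w ` I)" "inj_on w I" "finite I" "lincomb I a w = lincomb I b w" "j \<in> I"
  shows "a j = b j"
proof -
  let ?f = "the_inv_into I w"
  have eq: "lincomb (w ` I) (a \<circ> ?f) (\<lambda>v. v) = lincomb (w ` I) (b \<circ> ?f) (\<lambda>v. v)"
    using assms(2,4) by (simp add: lincomb_reindex the_inv_into_f_f comp_def cong: lincomb_cong)
  have "(a \<circ> ?f) (w j) = (b \<circ> ?f) (w j)"
    using lin_indep_coeffs_unique[OF assms(1) _ eq] assms(3,5) by blast
  then show ?thesis using assms(2,5) by (simp add: the_inv_into_f_f)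
qed

section \<open>Lattice points and primitive vectors\<close>

lemma smul_smul [simp]: "smul s (smul t v) = smul (s * t) v"
  by (simp add: smul_def mult.assoc)

lemma smul_one [simp]: "smul 1 v = v"
  by (simp add: smul_def)

lemma smul_zero_vec [simp]: "smul t vzero = vzero"
  and smul_zero [simp]: "smul 0 v = vzero"
  by (auto simp: smul_def)

lemma smul_right_cancel:
  assumes "smul s u = smul r u" "u \<noteq> vzero"
  shows "s = r"
proof -
  obtain i where "u i \<noteq> 0" using assms(2) by auto
  moreover have "s * u i = r * u i" using fun_cong[OF assms(1), of i] by (simp add: smul_def)
  ultimately show ?thesis by simp
qed

lemma lattice_subset_space: "lattice d \<subseteq> space d"
  unfolding lattice_def by auto

lemma lattice_coord_int: "x \<in> lattice d \<Longrightarrow> x i \<in> \<int>"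
  unfolding lattice_def by auto

lemma lattice_coord_zero: "x \<in> lattice d \<Longrightarrow> d \<le> i \<Longrightarrow> x i = 0"
  unfolding lattice_def space_def by auto

lemma lattice_zero: "vzero \<in> lattice d"
  unfolding lattice_def space_def by auto

lemma lattice_add: "x \<in> lattice d \<Longrightarrow> y \<in> lattice d \<Longrightarrow> (\<lambda>i. x i + y i) \<in> lattice d"
  unfolding lattice_def space_def by auto

lemma lattice_diff: "x \<in> lattice d \<Longrightarrow> y \<in> lattice d \<Longrightarrow> (\<lambda>i. x i - y i) \<in> lattice d"
  unfolding lattice_def space_def by auto

lemma lattice_smul_int: "x \<in> lattice d \<Longrightarrow> k \<in> \<int> \<Longrightarrow> smul k x \<in> lattice d"
  unfolding lattice_def space_def smul_def by auto

lemma space_mono: "d \<le> e \<Longrightarrow> space d \<subseteq> space e"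
  unfolding space_def by auto

lemma lattice_mono: "d \<le> e \<Longrightarrow> lattice d \<subseteq> lattice e"
  unfolding lattice_def using space_mono by blast

lemma space_lincomb:
  "finite I \<Longrightarrow> (\<And>j. j \<in> I \<Longrightarrow> w j \<in> space d) \<Longrightarrow> lincomb I a w \<in> space d"
  by (rule lincomb_closed[where P="\<lambda>_. True"]) (auto simp: space_def smul_def)

lemma lattice_lincomb:
  "finite I \<Longrightarrow> (\<And>j. j \<in> I \<Longrightarrow> a j \<in> \<int>) \<Longrightarrow> (\<And>j. j \<in> I \<Longrightarrow> w j \<in> lattice d)
   \<Longrightarrow> lincomb I a w \<in> lattice d"
  by (rule lincomb_closed[where P="\<lambda>t. t \<in> \<int>"])
    (auto intro: lattice_zero lattice_add lattice_smul_int)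

lemma pos_hull_subset_space: "S \<subseteq> space d \<Longrightarrow> pos_hull S \<subseteq> space d"
  unfolding pos_hull_coeff_span coeff_span_def by (auto intro!: space_lincomb)

definition unit_vec :: "nat \<Rightarrow> vec" where
  "unit_vec k = (\<lambda>i. if i = k then 1 else 0)"

lemma space_unit_vec_expansion: "y \<in> space d \<Longrightarrow> y = lincomb {..<d} (\<lambda>i. y i) unit_vec"
proof
  fix k assume y: "y \<in> space d"
  have "lincomb {..<d} (\<lambda>i. y i) unit_vec k = (\<Sum>i<d. if i = k then y i else 0)"
    by (simp add: lincomb_apply unit_vec_def if_distrib cong: if_cong)
  also have "\<dots> = y k" using y unfolding space_def by (auto simp: sum.delta)
  finally show "y k = lincomb {..<d} (\<lambda>i. y i) unit_vec k" by simp
qed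

definition primitive :: "nat \<Rightarrow> vec \<Rightarrow> bool" where
  "primitive d v \<longleftrightarrow> (\<forall>t. 0 < t \<and> t < 1 \<longrightarrow> smul t v \<notin> lattice d)"

lemma ext_gens_primitive: "ext_gens d C = {v \<in> lattice d. extreme_ray C v \<and> primitive d v}"
  unfolding ext_gens_def primitive_def by simp

lemma primitive_nonzero:
  assumes "primitive d v"
  shows "v \<noteq> vzero"
proof
  assume "v = vzero"
  then have "smul (1/2) v \<in> lattice d" using lattice_zero by simp
  moreover have "(0::real) < 1/2" "(1/2::real) < 1" by simp_all
  ultimately show False using assms unfolding primitive_def by blast
qed

lemma primitive_multiple_int:
  assumes "v \<in> lattice d" "primitive d v" "smul t v \<in> lattice d"
  shows "t \<in> \<int>"
proof (rule ccontr)
  assume nt: "t \<notin> \<int>"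
  let ?r = "t - of_int \<lfloor>t\<rfloor>"
  have "?r \<noteq> 0" using nt by (metis Ints_of_int eq_iff_diff_eq_0)
  then have r: "0 < ?r" "?r < 1" by linarith+
  have "smul ?r v = (\<lambda>i. smul t v i - smul (of_int \<lfloor>t\<rfloor>) v i)"
    by (auto simp: smul_def algebra_simps)
  also have "\<dots> \<in> lattice d"
    by (rule lattice_diff[OF assms(3) lattice_smul_int[OF assms(1)]]) auto
  finally show False using assms(2) r unfolding primitive_def by blast
qed

lemma primitive_multiple_eq:
  assumes "u \<in> lattice d" "q \<in> lattice d" "primitive d u" "primitive d q" "u = smul r q" "r > 0"
  shows "u = q"
proof -
  have "r = 1"
  proof (rule ccontr)
    assume "r \<noteq> 1"
    then consider "r < 1" | "r > 1" by linarith
    then show False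
    proof cases
      case 1
      then show ?thesis using assms unfolding primitive_def by blast
    next
      case 2
      have "smul (1/r) u = q" using assms(5,6) by simp
      moreover have "0 < 1/r" "1/r < 1" using 2 by auto
      ultimately show ?thesis using assms(2,3) unfolding primitive_def by metis
    qed
  qed
  then show ?thesis using assms(5) by simp
qed

lemma primitive_multiple_exists:
  assumes "v \<in> lattice d" "v \<noteq> vzero"
  shows "\<exists>t>0. smul t v \<in> lattice d \<and> primitive d (smul t v)"
proof -
  obtain i where vi: "v i \<noteq> 0" using assms(2) by auto
  define N where "N = \<lceil>\<bar>v i\<bar>\<rceil>"
  define A where "A = {t. 0 < t \<and> t \<le> 1 \<and> smul t v \<in> lattice d}"
  have "A \<subseteq> (\<lambda>k. of_int k / v i) ` {-N..N}"
  proof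
    fix t assume "t \<in> A"
    then have t: "0 < t" "t \<le> 1" "t * v i \<in> \<int>"
      unfolding A_def lattice_def smul_def by auto
    then obtain k where k: "t * v i = of_int k" by (auto elim: Ints_cases)
    have "\<bar>of_int k\<bar> \<le> \<bar>v i\<bar>"
      unfolding k[symmetric] using t by (simp add: abs_mult mult_left_le_one_le)
    then have "of_int \<bar>k\<bar> \<le> (of_int N :: real)"
      unfolding N_def using le_of_int_ceiling order_trans by fastforce
    then have "k \<in> {-N..N}" by (simp add: abs_le_iff)
    moreover have "t = of_int k / v i" using k vi by (simp add: field_simps)
    ultimately show "t \<in> (\<lambda>k. of_int k / v i) ` {-N..N}" by blast
  qed
  then have finA: "finite A" by (rule finite_subset) auto
  have "1 \<in> A" unfolding A_def using assms(1) by simp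
  define t where "t = Min A"
  have tA: "t \<in> A" unfolding t_def using finA \<open>1 \<in> A\<close> by (auto intro: Min_in)
  have tmin: "\<And>s. s \<in> A \<Longrightarrow> t \<le> s" unfolding t_def using finA by auto
  have "primitive d (smul t v)"
    unfolding primitive_def
  proof (intro allI impI notI)
    fix r assume r: "0 < r \<and> r < 1" "smul r (smul t v) \<in> lattice d"
    then have "r * t \<in> A" using tA unfolding A_def by (auto simp: mult_le_one)
    then have "t \<le> r * t" by (rule tmin)
    moreover have "r * t < t" using r tA unfolding A_def by auto
    ultimately show False by simp
  qed
  then show ?thesis using tA unfolding A_def by auto
qed

section \<open>Extreme rays of rational cones\<close>

lemma rational_cone_pos_hull:
  "rational_cone d C \<Longrightarrow> \<exists>S. finite S \<and> S \<subseteq> lattice d \<and> C = pos_hull S"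
  unfolding rational_cone_def by auto

lemma rational_cone_add: "rational_cone d C \<Longrightarrow> x \<in> C \<Longrightarrow> y \<in> C \<Longrightarrow> (\<lambda>i. x i + y i) \<in> C"
  using rational_cone_pos_hull pos_hull_add by blast

lemma rational_cone_smul: "rational_cone d C \<Longrightarrow> x \<in> C \<Longrightarrow> t \<ge> 0 \<Longrightarrow> smul t x \<in> C"
  using rational_cone_pos_hull pos_hull_smul by blast

lemma rational_cone_zero: "rational_cone d C \<Longrightarrow> vzero \<in> C"
  using rational_cone_pos_hull pos_hull_zero by blast

lemma pointed_add_eq_zero:
  assumes "rational_cone d C" "x \<in> C" "y \<in> C" "(\<lambda>i. x i + y i) = vzero"
  shows "x = vzero"
proof -
  have "y = smul (-1) x"
  proof
    fix i
    show "y i = smul (-1) x i" using fun_cong[OF assms(4), of i] by (simp add: smul_def)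
  qed
  then show ?thesis using assms unfolding rational_cone_def by auto
qed

lemma extreme_rayD:
  assumes "extreme_ray C u" "x \<in> C" "y \<in> C" "t \<ge> 0" "(\<lambda>i. x i + y i) = smul t u"
  shows "(\<exists>s\<ge>0. x = smul s u) \<and> (\<exists>s\<ge>0. y = smul s u)"
  using assms unfolding extreme_ray_def by blast

lemma extreme_ray_sum_decomp:
  assumes ext: "extreme_ray C u" and rc: "rational_cone d C"
    and "finite I" "\<And>j. j \<in> I \<Longrightarrow> f j \<in> C" "(\<lambda>i. \<Sum>j\<in>I. f j i) = smul t u" "t \<ge> 0"
  shows "\<forall>j\<in>I. \<exists>s\<ge>0. f j = smul s u"
  using assms(3-6)
proof (induction I arbitrary: t rule: finite_induct)
  case empty
  then show ?case by simp
next
  case (insert j I)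
  have "lincomb I (\<lambda>_. 1) f \<in> C"
    by (rule lincomb_closed[where P="\<lambda>t. t = 1" and K=C])
      (use insert rational_cone_zero[OF rc] rational_cone_add[OF rc] in auto)
  then have sC: "(\<lambda>i. \<Sum>j\<in>I. f j i) \<in> C" by (simp add: lincomb_def)
  have "(\<lambda>i. f j i + (\<Sum>j\<in>I. f j i)) = smul t u"
    using insert(1,2,5) by (simp add: fun_eq_iff)
  then have "(\<exists>s\<ge>0. f j = smul s u) \<and> (\<exists>s\<ge>0. (\<lambda>i. \<Sum>j\<in>I. f j i) = smul s u)"
    using insert.prems(1) by (intro extreme_rayD[OF ext _ sC insert.prems(3)]) auto
  then obtain s0 s1 where s0: "s0 \<ge> 0" "f j = smul s0 u"
    and s1: "s1 \<ge> 0" "(\<lambda>i. \<Sum>j\<in>I. f j i) = smul s1 u"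
    by blast
  have "\<forall>j\<in>I. \<exists>s\<ge>0. f j = smul s u"
    by (rule insert.IH[OF _ s1(2) s1(1)]) (use insert.prems in simp)
  then show ?case using s0 by blast
qed

lemma extreme_ray_multiple_of_summand:
  assumes ext: "extreme_ray C u" and rc: "rational_cone d C"
    and "finite I" "\<And>j. j \<in> I \<Longrightarrow> w j \<in> C" "\<And>j. j \<in> I \<Longrightarrow> a j \<ge> 0" "lincomb I a w = u"
  shows "\<exists>j\<in>I. \<exists>r>0. u = smul r (w j)"
proof -
  have "\<forall>j\<in>I. \<exists>s\<ge>0. smul (a j) (w j) = smul s u"
    by (rule extreme_ray_sum_decomp[OF ext rc assms(3), of _ 1])
      (use assms rational_cone_smul[OF rc] in \<open>auto simp: smul_def lincomb_def\<close>)
  then obtain s where s: "\<And>j. j \<in> I \<Longrightarrow> s j \<ge> 0 \<and> smul (a j) (w j) = smul (s j) u"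
    by metis
  have u0: "u \<noteq> vzero" using ext unfolding extreme_ray_def by auto
  have "u = (\<lambda>i. \<Sum>j\<in>I. smul (a j) (w j) i)"
    using assms(6) by (auto simp: lincomb_def smul_def)
  also have "\<dots> = smul (\<Sum>j\<in>I. s j) u"
    using s by (auto simp: smul_def sum_distrib_right intro!: sum.cong)
  finally have "smul 1 u = smul (\<Sum>j\<in>I. s j) u" by simp
  then have "(\<Sum>j\<in>I. s j) = 1" using smul_right_cancel u0 by metis
  have "\<exists>j\<in>I. s j > 0"
  proof (rule ccontr)
    assume "\<not> (\<exists>j\<in>I. s j > 0)"
    then have "(\<Sum>j\<in>I. s j) \<le> 0" by (intro sum_nonpos) (simp add: not_less)
    then show False using \<open>(\<Sum>j\<in>I. s j) = 1\<close> by simp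
  qed
  then obtain j where j: "j \<in> I" "s j > 0" by blast
  have sj: "smul (a j) (w j) = smul (s j) u" using s[OF j(1)] by (rule conjunct2)
  have "a j \<noteq> 0"
  proof
    assume "a j = 0"
    then have "smul (s j) u = smul 0 u" using sj by simp
    then have "s j = 0" using u0 by (rule smul_right_cancel)
    then show False using j by simp
  qed
  then have aj: "a j > 0" using assms(5) j by (simp add: order_less_le)
  have "u = smul (1 / s j) (smul (a j) (w j))" using sj j by simp
  then show ?thesis using j aj by (intro bexI[of _ j] exI[of _ "a j / s j"]) auto
qed

lemma extreme_ray_smul:
  assumes "extreme_ray C s" "t > 0" "smul t s \<in> C"
  shows "extreme_ray C (smul t s)"
proof -
  have s0: "s \<noteq> vzero" using assms(1) unfolding extreme_ray_def by auto
  have "smul t s \<noteq> vzero"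
    using smul_right_cancel[of t s 0] s0 assms(2) by auto
  moreover have "(\<exists>s'\<ge>0. x = smul s' (smul t s)) \<and> (\<exists>s'\<ge>0. y = smul s' (smul t s))"
    if "x \<in> C" "y \<in> C" "r \<ge> 0" "(\<lambda>i. x i + y i) = smul r (smul t s)" for x y r
  proof -
    have "(\<exists>s'\<ge>0. x = smul s' s) \<and> (\<exists>s'\<ge>0. y = smul s' s)"
      using assms(1) that unfolding extreme_ray_def
      by (metis smul_smul zero_le_mult_iff assms(2) less_eq_real_def)
    then obtain a b where ab: "a \<ge> 0" "x = smul a s" "b \<ge> 0" "y = smul b s" by blast
    have "x = smul (a / t) (smul t s)" "y = smul (b / t) (smul t s)" using ab assms(2) by auto
    then show ?thesis using ab assms(2) by (metis divide_nonneg_pos)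
  qed
  ultimately show ?thesis using assms(3) unfolding extreme_ray_def by blast
qed

lemma pos_hull_irredundant_subset:
  assumes "finite S"
  obtains S0 where "S0 \<subseteq> S" "pos_hull S0 = pos_hull S" "\<And>s. s \<in> S0 \<Longrightarrow> s \<notin> pos_hull (S0 - {s})"
proof -
  let ?P = "\<lambda>S0. S0 \<subseteq> S \<and> pos_hull S0 = pos_hull S"
  obtain S0 where S0: "?P S0" and S0min: "\<And>S1. ?P S1 \<Longrightarrow> card S0 \<le> card S1"
    using ex_has_least_nat[of ?P S card] by auto
  have fin0: "finite S0" using S0 assms finite_subset by blast
  have "s \<notin> pos_hull (S0 - {s})" if s: "s \<in> S0" for s
  proof
    assume "s \<in> pos_hull (S0 - {s})"
    then have "S0 \<subseteq> pos_hull (S0 - {s})"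
      by (auto intro: pos_hull_base)
    then have "pos_hull S0 \<subseteq> pos_hull (S0 - {s})" by (rule pos_hull_trans)
    moreover have "pos_hull (S0 - {s}) \<subseteq> pos_hull S0" by (rule pos_hull_mono) blast
    ultimately have "?P (S0 - {s})" using S0 by auto
    then have "card S0 \<le> card (S0 - {s})" by (rule S0min)
    moreover have "card (S0 - {s}) < card S0" by (rule card_Diff1_less[OF fin0 s])
    ultimately show False by simp
  qed
  then show ?thesis using that S0 by blast
qed

lemma pos_hull_insert_decomp:
  assumes "finite R" "s \<notin> R" "x \<in> pos_hull (insert s R)"
  obtains a x' where "0 \<le> a" "x' \<in> pos_hull R" "x = (\<lambda>i. a * s i + x' i)"
proof -
  obtain c where c: "\<forall>v\<in>insert s R. 0 \<le> c v" "x = lincomb (insert s R) c (\<lambda>v. v)"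
    using pos_hull_finite_coeffs assms(1,3) by blast
  have "lincomb R c (\<lambda>v. v) \<in> pos_hull R"
    by (rule pos_hull_lincomb[OF assms(1)]) (use c in \<open>auto intro: pos_hull_base\<close>)
  moreover have "x = (\<lambda>i. c s * s i + lincomb R c (\<lambda>v. v) i)"
    using c(2) lincomb_insert[OF assms(1,2)] by simp
  ultimately show ?thesis using that c(1) by blast
qed

lemma irredundant_generator_extreme:
  assumes rc: "rational_cone d C" and fin: "finite S0" and C: "C = pos_hull S0"
    and s: "s \<in> S0" and notin: "s \<notin> pos_hull (S0 - {s})"
    and x: "x \<in> C" and y: "y \<in> C" and sum: "(\<lambda>i. x i + y i) = smul t s"
  shows "\<exists>r\<ge>0. x = smul r s"
proof -
  let ?R = "S0 - {s}"
  have R: "finite ?R" "s \<notin> ?R" "insert s ?R = S0" using fin s by auto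
  obtain a x' where a: "0 \<le> a" "x' \<in> pos_hull ?R" "x = (\<lambda>i. a * s i + x' i)"
    using pos_hull_insert_decomp[OF R(1,2)] x unfolding C R(3) by blast
  obtain b y' where b: "0 \<le> b" "y' \<in> pos_hull ?R" "y = (\<lambda>i. b * s i + y' i)"
    using pos_hull_insert_decomp[OF R(1,2)] y unfolding C R(3) by blast
  let ?z = "\<lambda>i. x' i + y' i"
  have zR: "?z \<in> pos_hull ?R" using a(2) b(2) by (rule pos_hull_add)
  have RC: "pos_hull ?R \<subseteq> C" unfolding C by (rule pos_hull_mono) blast
  have key: "?z i = (t - (a + b)) * s i" for i
    using fun_cong[OF sum, of i] a(3) b(3) by (simp add: smul_def algebra_simps)
  show ?thesis
  proof (cases "a + b < t")
    case True
    then have "s = smul (1 / (t - (a + b))) ?z" using key by (simp add: smul_def fun_eq_iff)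
    moreover have "smul (1 / (t - (a + b))) ?z \<in> pos_hull ?R" using zR True
      by (simp add: pos_hull_smul)
    ultimately show ?thesis using notin by simp
  next
    case False
    have "smul (a + b - t) s \<in> C" using False s C by (auto intro: pos_hull_smul pos_hull_base)
    moreover have "(\<lambda>i. ?z i + smul (a + b - t) s i) = vzero"
      using key by (simp add: smul_def fun_eq_iff algebra_simps)
    ultimately have "?z = vzero" using pointed_add_eq_zero[OF rc] zR RC by blast
    then have "x' = vzero" using pointed_add_eq_zero[OF rc] a(2) b(2) RC by blast
    then show ?thesis using a(1,3) by (auto simp: smul_def)
  qed
qed

lemma irredundant_generator_extreme_ray:
  assumes rc: "rational_cone d C" and fin: "finite S0" and C: "C = pos_hull S0"
    and s: "s \<in> S0" and notin: "s \<notin> pos_hull (S0 - {s})"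
  shows "extreme_ray C s"
proof -
  have "s \<noteq> vzero" using notin pos_hull_zero by metis
  moreover have "(\<exists>r\<ge>0. x = smul r s) \<and> (\<exists>r\<ge>0. y = smul r s)"
    if "x \<in> C" "y \<in> C" "t \<ge> 0" "(\<lambda>i. x i + y i) = smul t s" for x y t
  proof
    show "\<exists>r\<ge>0. x = smul r s"
      by (rule irredundant_generator_extreme[OF rc fin C s notin]) (use that in auto)
    have "(\<lambda>i. y i + x i) = smul t s" using that(4) by (simp add: add.commute)
    then show "\<exists>r\<ge>0. y = smul r s"
      by (intro irredundant_generator_extreme[OF rc fin C s notin]) (use that in auto)
  qed
  ultimately show ?thesis using s C pos_hull_base unfolding extreme_ray_def by blast
qed

lemma extreme_ray_ext_gen_multiple:
  assumes "rational_cone d C" "extreme_ray C s" "s \<in> lattice d"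
  shows "\<exists>t>0. smul t s \<in> ext_gens d C"
proof -
  have "s \<noteq> vzero" "s \<in> C" using assms(2) unfolding extreme_ray_def by auto
  then obtain t where t: "t > 0" "smul t s \<in> lattice d" "primitive d (smul t s)"
    using primitive_multiple_exists assms(3) by blast
  have "smul t s \<in> C" using rational_cone_smul[OF assms(1) \<open>s \<in> C\<close>] t(1) by simp
  then have "extreme_ray C (smul t s)" using extreme_ray_smul assms(2) t(1) by blast
  then show ?thesis unfolding ext_gens_primitive using t by auto
qed

lemma ext_gen_multiple_of_generator:
  assumes rc: "rational_cone d C" and fin: "finite S" and C: "C = pos_hull S" and S: "S \<subseteq> C"
    and u: "u \<in> ext_gens d C"
  shows "\<exists>q\<in>S. \<exists>r>0. u = smul r q"
proof -
  have "u \<in> C" using u unfolding ext_gens_def extreme_ray_def by blast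
  then obtain c where c: "\<forall>v\<in>S. c v \<ge> 0" "u = lincomb S c (\<lambda>v. v)"
    using pos_hull_finite_coeffs[OF fin] C by blast
  show ?thesis
    by (rule extreme_ray_multiple_of_summand[of C u d])
      (use u c rc fin S in \<open>auto simp: ext_gens_def\<close>)
qed

lemma rational_cone_ext_gens:
  assumes rc: "rational_cone d C"
  shows "finite (ext_gens d C) \<and> C = pos_hull (ext_gens d C)"
proof -
  obtain S where S: "finite S" "S \<subseteq> lattice d" "C = pos_hull S"
    using rational_cone_pos_hull[OF rc] by blast
  obtain S0 where S0: "S0 \<subseteq> S" "pos_hull S0 = C" "\<And>s. s \<in> S0 \<Longrightarrow> s \<notin> pos_hull (S0 - {s})"
    using pos_hull_irredundant_subset[OF S(1)] S(3) by metis
  have fin0: "finite S0" using S0(1) S(1) finite_subset by blast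
  have "\<forall>s\<in>S0. \<exists>t>0. smul t s \<in> ext_gens d C"
    using extreme_ray_ext_gen_multiple[OF rc]
      irredundant_generator_extreme_ray[OF rc fin0 S0(2)[symmetric]] S0(1,3) S(2)
    by blast
  then obtain tt where tt: "\<And>s. s \<in> S0 \<Longrightarrow> tt s > 0 \<and> smul (tt s) s \<in> ext_gens d C"
    by metis
  define p where "p s = smul (tt s) s" for s
  have extC: "ext_gens d C \<subseteq> C" unfolding ext_gens_def extreme_ray_def by auto
  have "S0 \<subseteq> pos_hull (p ` S0)"
  proof
    fix s assume s: "s \<in> S0"
    have "smul (1 / tt s) (p s) \<in> pos_hull (p ` S0)"
      using s tt[OF s] by (intro pos_hull_smul pos_hull_base) auto
    then show "s \<in> pos_hull (p ` S0)" using tt[OF s] unfolding p_def by simp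
  qed
  then have "C \<subseteq> pos_hull (p ` S0)" using S0(2) pos_hull_trans by blast
  moreover have pS0C: "p ` S0 \<subseteq> C" using tt extC unfolding p_def by blast
  ultimately have CpS0: "C = pos_hull (p ` S0)"
    using pos_hull_trans[of "p ` S0" S] S(3) by auto
  also have "\<dots> \<subseteq> pos_hull (ext_gens d C)" by (rule pos_hull_mono) (use tt p_def in auto)
  also have "\<dots> \<subseteq> C" using S(3) extC pos_hull_trans by blast
  finally have Ceq: "C = pos_hull (ext_gens d C)" by blast
  have "ext_gens d C \<subseteq> p ` S0"
  proof
    fix u assume u: "u \<in> ext_gens d C"
    obtain q r where q: "q \<in> p ` S0" "r > 0" "u = smul r q"
      using ext_gen_multiple_of_generator[OF rc finite_imageI[OF fin0] CpS0 pS0C u] by blast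
    have "u = q"
      by (rule primitive_multiple_eq[OF _ _ _ _ q(3) q(2)])
        (use u tt q(1) in \<open>auto simp: ext_gens_primitive p_def\<close>)
    then show "u \<in> p ` S0" using q by simp
  qed
  then show ?thesis using fin0 finite_subset Ceq by blast
qed

lemma ext_gens_subset_hilb: "ext_gens e D \<subseteq> hilb e D"
proof
  fix u assume u: "u \<in> ext_gens e D"
  then have uL: "u \<in> lattice e" and ex: "extreme_ray D u" and pu: "primitive e u"
    unfolding ext_gens_primitive by auto
  have uD: "u \<in> D" and u0: "u \<noteq> vzero" using ex unfolding extreme_ray_def by auto
  have "\<not> (\<exists>y\<in>D \<inter> lattice e. \<exists>z\<in>D \<inter> lattice e. y \<noteq> vzero \<and> z \<noteq> vzero \<and> u = (\<lambda>i. y i + z i))"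
  proof
    assume "\<exists>y\<in>D \<inter> lattice e. \<exists>z\<in>D \<inter> lattice e. y \<noteq> vzero \<and> z \<noteq> vzero \<and> u = (\<lambda>i. y i + z i)"
    then obtain y z
      where yz: "y \<in> D" "y \<in> lattice e" "z \<in> D" "y \<noteq> vzero" "z \<noteq> vzero" "u = (\<lambda>i. y i + z i)"
      by blast
    have "(\<exists>s\<ge>0. y = smul s u) \<and> (\<exists>s\<ge>0. z = smul s u)"
      using extreme_rayD[OF ex yz(1,3), of 1] yz(6) by simp
    then obtain s r where sr: "s \<ge> 0" "y = smul s u" "r \<ge> 0" "z = smul r u" by blast
    have "smul 1 u = smul (s + r) u" using yz(6) sr
      by (auto simp: smul_def fun_eq_iff algebra_simps)
    then have "s + r = 1" using smul_right_cancel[OF _ u0] by metis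
    moreover have "s \<noteq> 0" "r \<noteq> 0" using sr yz(4,5) by auto
    ultimately have "0 < s" "s < 1" using sr by auto
    then show False using pu yz(2) sr(2) unfolding primitive_def by blast
  qed
  then show "u \<in> hilb e D" unfolding hilb_def using uD uL u0 by blast
qed

section \<open>Cones spanned by linearly independent primitive vectors\<close>

locale basis_cone =
  fixes d :: nat and G :: "vec set"
  assumes fin: "finite G" and lat: "G \<subseteq> lattice d" and li: "lin_indep G"
    and prm: "\<And>g. g \<in> G \<Longrightarrow> primitive d g" and nz: "vzero \<notin> G"
begin

lemma coords: "x \<in> pos_hull G \<Longrightarrow> \<exists>a. (\<forall>v\<in>G. a v \<ge> 0) \<and> x = lincomb G a (\<lambda>v. v)"
  using pos_hull_finite_coeffs[OF fin] by blast

lemma sum_eq_multiple_of_gen: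
  assumes x: "x \<in> pos_hull G" and y: "y \<in> pos_hull G" and g: "g \<in> G"
    and eq: "(\<lambda>i. x i + y i) = smul t g"
  shows "\<exists>a b. 0 \<le> a \<and> 0 \<le> b \<and> a + b = t \<and> x = smul a g \<and> y = smul b g"
proof -
  obtain a where a: "\<forall>v\<in>G. a v \<ge> 0" "x = lincomb G a (\<lambda>v. v)" using coords x by blast
  obtain b where b: "\<forall>v\<in>G. b v \<ge> 0" "y = lincomb G b (\<lambda>v. v)" using coords y by blast
  have "lincomb G (\<lambda>h. a h + b h) (\<lambda>v. v) = lincomb G (\<lambda>h. if h = g then t else 0) (\<lambda>v. v)"
    using eq a(2) b(2) lincomb_add[of G a "\<lambda>v. v" b]
      lincomb_single[OF fin g, of "\<lambda>h. if h = g then t else 0" "\<lambda>v. v"]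
    by simp
  then have co: "\<And>h. h \<in> G \<Longrightarrow> a h + b h = (if h = g then t else 0)"
    using lin_indep_coeffs_unique[OF li fin] by blast
  have "a h = 0 \<and> b h = 0" if "h \<in> G" "h \<noteq> g" for h
    using co[of h] a b that by (auto simp: add_nonneg_eq_0_iff)
  then have "x = smul (a g) g" "y = smul (b g) g"
    using a(2) b(2) lincomb_single[OF fin g] by auto
  then show ?thesis using co[OF g] a(1) b(1) g by auto
qed

lemma rational: "rational_cone d (pos_hull G)"
  unfolding rational_cone_def
proof (intro conjI allI impI)
  show "\<exists>S. finite S \<and> S \<subseteq> lattice d \<and> pos_hull G = pos_hull S" using fin lat by blast
next
  fix x assume x: "x \<in> pos_hull G \<and> smul (-1) x \<in> pos_hull G"
  obtain a where a: "\<forall>v\<in>G. a v \<ge> 0" "x = lincomb G a (\<lambda>v. v)" using coords x by blast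
  obtain b where b: "\<forall>v\<in>G. b v \<ge> 0" "smul (-1) x = lincomb G b (\<lambda>v. v)" using coords x by blast
  have "(\<lambda>i. lincomb G a (\<lambda>v. v) i + lincomb G b (\<lambda>v. v) i) = vzero"
    using a(2) b(2)[symmetric] by (auto simp: smul_def)
  then have "lincomb G (\<lambda>h. a h + b h) (\<lambda>v. v) = lincomb G (\<lambda>_. 0) (\<lambda>v. v)"
    unfolding lincomb_add by (simp add: lincomb_def)
  then have "\<And>h. h \<in> G \<Longrightarrow> a h + b h = 0" using lin_indep_coeffs_unique[OF li fin] by blast
  then have "\<forall>h\<in>G. a h = 0" using a b by (auto simp: add_nonneg_eq_0_iff)
  then show "x = vzero" using a(2) by (simp add: lincomb_def)
qed

lemma ext_gens_eq: "ext_gens d (pos_hull G) = G"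
proof
  show "G \<subseteq> ext_gens d (pos_hull G)"
  proof
    fix g assume g: "g \<in> G"
    have "(\<exists>s\<ge>0. x = smul s g) \<and> (\<exists>s\<ge>0. y = smul s g)"
      if x: "x \<in> pos_hull G" and y: "y \<in> pos_hull G"
        and sum: "\<exists>t\<ge>0. (\<lambda>i. x i + y i) = smul t g" for x y
    proof -
      obtain t where "(\<lambda>i. x i + y i) = smul t g" using sum by blast
      then obtain a b where "0 \<le> a" "0 \<le> b" "x = smul a g" "y = smul b g"
        using sum_eq_multiple_of_gen[OF x y g] by blast
      then show ?thesis by blast
    qed
    then have "extreme_ray (pos_hull G) g"
      unfolding extreme_ray_def using g nz pos_hull_base by blast
    then show "g \<in> ext_gens d (pos_hull G)" unfolding ext_gens_primitive using g lat prm by auto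
  qed
next
  show "ext_gens d (pos_hull G) \<subseteq> G"
  proof
    fix u assume u: "u \<in> ext_gens d (pos_hull G)"
    obtain g r where g: "g \<in> G" "r > 0" "u = smul r g"
      using ext_gen_multiple_of_generator[OF rational fin refl _ u] pos_hull_base by blast
    have "u = g"
      by (rule primitive_multiple_eq[OF _ _ _ _ g(3) g(2)])
        (use u g(1) lat prm in \<open>auto simp: ext_gens_primitive\<close>)
    then show "u \<in> G" using g by simp
  qed
qed

lemma simplicial: "simplicial d (pos_hull G)"
  unfolding simplicial_def using rational ext_gens_eq li by simp

context
  assumes uni: "lattice d \<inter> lin_span G \<subseteq> int_span G"
begin

lemma unimodular: "unimodular d (pos_hull G)"
  unfolding unimodular_def using simplicial uni ext_gens_eq by simp

lemma lattice_point_coeffs: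
  assumes "x \<in> pos_hull G" "x \<in> lattice d"
  shows "\<exists>a. (\<forall>g\<in>G. a g \<in> \<int> \<and> 0 \<le> a g) \<and> x = lincomb G a (\<lambda>v. v)"
proof -
  obtain a where a: "\<forall>v\<in>G. a v \<ge> 0" "x = lincomb G a (\<lambda>v. v)" using coords assms(1) by blast
  have "x \<in> int_span G" using uni assms pos_hull_subset_lin_span by blast
  then obtain n where n: "\<forall>v\<in>G. n v \<in> \<int>" "x = lincomb G n (\<lambda>v. v)"
    using int_span_finite_coeffs[OF fin] by blast
  have "\<And>g. g \<in> G \<Longrightarrow> a g = n g" using lin_indep_coeffs_unique[OF li fin] a(2) n(2) by metis
  then show ?thesis using a n by auto
qed

lemma hilb_subset: "hilb d (pos_hull G) \<subseteq> G"
proof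
  fix x assume x: "x \<in> hilb d (pos_hull G)"
  then have xD: "x \<in> pos_hull G" "x \<in> lattice d" "x \<noteq> vzero" unfolding hilb_def by auto
  obtain a where a: "\<forall>g\<in>G. a g \<in> \<int> \<and> 0 \<le> a g" "x = lincomb G a (\<lambda>v. v)"
    using lattice_point_coeffs xD by blast
  obtain g where g: "g \<in> G" "a g \<noteq> 0"
    using a(2) xD(3) by (force simp: lincomb_def)
  have "a g \<ge> 1"
    using a(1) g Ints_nonzero_abs_ge1[of "a g"] by auto
  let ?z = "(\<lambda>i. x i - g i)"
  have "?z = lincomb G (\<lambda>h. a h - (if h = g then 1 else 0)) (\<lambda>v. v)"
    using a(2) lincomb_diff[of G a "\<lambda>v. v" "\<lambda>h. if h = g then 1 else 0"]
      lincomb_single[OF fin g(1), of "\<lambda>h. if h = g then 1 else 0" "\<lambda>v. v"]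
    by simp
  also have "\<dots> \<in> pos_hull G"
    by (rule pos_hull_lincomb[OF fin]) (use a \<open>a g \<ge> 1\<close> in \<open>auto intro: pos_hull_base\<close>)
  finally have zD: "?z \<in> pos_hull G" .
  have zL: "?z \<in> lattice d" using lattice_diff xD g lat by blast
  show "x \<in> G"
  proof (rule ccontr)
    assume "x \<notin> G"
    have "?z \<noteq> vzero"
    proof
      assume "?z = vzero"
      then have "x = g" by (auto simp: fun_eq_iff dest: fun_cong)
      then show False using \<open>x \<notin> G\<close> g(1) by simp
    qed
    moreover have "x = (\<lambda>i. g i + ?z i)" by simp
    moreover have "g \<in> pos_hull G \<inter> lattice d" "g \<noteq> vzero" using g pos_hull_base lat nz by auto
    ultimately show False using x zD zL unfolding hilb_def by blast
  qed
qed

end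

end

section \<open>Lattice automorphisms\<close>

definition vlinear :: "(vec \<Rightarrow> vec) \<Rightarrow> bool" where
  "vlinear f \<longleftrightarrow>
     (\<forall>x y. f (\<lambda>i. x i + y i) = (\<lambda>i. f x i + f y i)) \<and> (\<forall>t x. f (smul t x) = smul t (f x))"

definition lattice_aut :: "nat \<Rightarrow> (vec \<Rightarrow> vec) \<Rightarrow> (vec \<Rightarrow> vec) \<Rightarrow> bool" where
  "lattice_aut d U W \<longleftrightarrow> vlinear U \<and> vlinear W
     \<and> (\<forall>x\<in>space d. U x \<in> space d) \<and> (\<forall>x\<in>space d. W x \<in> space d)
     \<and> (\<forall>x\<in>lattice d. U x \<in> lattice d) \<and> (\<forall>x\<in>lattice d. W x \<in> lattice d)
     \<and> (\<forall>x\<in>space d. W (U x) = x) \<and> (\<forall>x\<in>space d. U (W x) = x)"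

lemma lattice_autD:
  assumes "lattice_aut d U W"
  shows "vlinear U" "vlinear W"
    and "x \<in> space d \<Longrightarrow> U x \<in> space d" "x \<in> space d \<Longrightarrow> W x \<in> space d"
    and "x \<in> lattice d \<Longrightarrow> U x \<in> lattice d" "x \<in> lattice d \<Longrightarrow> W x \<in> lattice d"
    and "x \<in> space d \<Longrightarrow> W (U x) = x" "x \<in> space d \<Longrightarrow> U (W x) = x"
  using assms unfolding lattice_aut_def by blast+

lemma vlinear_zero:
  assumes "vlinear f"
  shows "f vzero = vzero"
proof -
  have "f (smul 0 vzero) = smul 0 (f vzero)" using assms unfolding vlinear_def by blast
  then show ?thesis by simp
qed

lemma vlinear_lincomb:
  assumes "vlinear f" "finite I"
  shows "f (lincomb I a w) = lincomb I a (\<lambda>j. f (w j))"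
  using assms(2)
proof (induction I rule: finite_induct)
  case empty
  then show ?case using vlinear_zero[OF assms(1)] by simp
next
  case (insert j I)
  have "lincomb (insert j I) a w = (\<lambda>i. smul (a j) (w j) i + lincomb I a w i)"
    using insert by (simp add: lincomb_insert smul_def)
  then have "f (lincomb (insert j I) a w) = (\<lambda>i. f (smul (a j) (w j)) i + f (lincomb I a w) i)"
    using assms(1) unfolding vlinear_def by simp
  also have "\<dots> = (\<lambda>i. a j * f (w j) i + lincomb I a (\<lambda>j. f (w j)) i)"
    using insert assms(1) unfolding vlinear_def by (simp add: smul_def)
  also have "\<dots> = lincomb (insert j I) a (\<lambda>j. f (w j))" using insert by (simp add: lincomb_insert)
  finally show ?case .
qed

lemma vlinear_image_pos_hull:
  assumes "vlinear f"
  shows "f ` pos_hull S = pos_hull (f ` S)"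
proof
  show "f ` pos_hull S \<subseteq> pos_hull (f ` S)"
  proof
    fix y assume "y \<in> f ` pos_hull S"
    then obtain T c where T: "finite T" "T \<subseteq> S" "\<forall>v\<in>T. 0 \<le> c v" "y = f (lincomb T c (\<lambda>v. v))"
      unfolding pos_hull_coeff_span coeff_span_def by blast
    then have "y = lincomb T c f" using vlinear_lincomb[OF assms T(1)] by simp
    then show "y \<in> pos_hull (f ` S)" using T by (auto intro!: pos_hull_lincomb intro: pos_hull_base)
  qed
  show "pos_hull (f ` S) \<subseteq> f ` pos_hull S"
  proof
    fix y assume "y \<in> pos_hull (f ` S)"
    then obtain T c where T: "finite T" "T \<subseteq> f ` S" "\<forall>v\<in>T. 0 \<le> c v" "y = lincomb T c (\<lambda>v. v)"
      unfolding pos_hull_coeff_span coeff_span_def by blast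
    define g where "g = inv_into S f"
    have fg: "f (g t) = t" if "t \<in> T" for t
      using T(2) that unfolding g_def by (auto simp: f_inv_into_f)
    have "lincomb T c g \<in> pos_hull S"
      using T(1-3) unfolding g_def
      by (auto intro!: pos_hull_lincomb intro: pos_hull_base inv_into_into)
    moreover have "f (lincomb T c g) = y"
      using vlinear_lincomb[OF assms T(1)] T(4) fg by (simp cong: lincomb_cong)
    ultimately show "y \<in> f ` pos_hull S" by blast
  qed
qed

lemma lattice_aut_comp:
  assumes "lattice_aut d U W" "lattice_aut d U' W'"
  shows "lattice_aut d (\<lambda>x. U' (U x)) (\<lambda>x. W (W' x))"
  using assms unfolding lattice_aut_def vlinear_def by simp

lemma lattice_aut_id: "lattice_aut d (\<lambda>x. x) (\<lambda>x. x)"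
  unfolding lattice_aut_def vlinear_def by auto

lemma lattice_aut_transpose:
  assumes "i < d" "j < d"
  shows "lattice_aut d (\<lambda>x k. x (Transposition.transpose i j k))
                       (\<lambda>x k. x (Transposition.transpose i j k))"
proof -
  have "k \<ge> d \<Longrightarrow> Transposition.transpose i j k = k" for k
    using assms by (auto simp: transpose_def)
  then show ?thesis
    unfolding lattice_aut_def vlinear_def lattice_def space_def by (auto simp: smul_def)
qed

lemma lattice_aut_add_multiple:
  assumes "i < d" "j < d" "i \<noteq> j" "m \<in> \<int>"
  shows "lattice_aut d (\<lambda>x k. if k = i then x i + m * x j else x k)
                       (\<lambda>x k. if k = i then x i - m * x j else x k)"
  using assms unfolding lattice_aut_def vlinear_def lattice_def space_def
  by (auto simp: smul_def fun_eq_iff algebra_simps)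

lemma lattice_aut_neg:
  assumes "i < d"
  shows "lattice_aut d (\<lambda>x k. if k = i then - x k else x k) (\<lambda>x k. if k = i then - x k else x k)"
  using assms unfolding lattice_aut_def vlinear_def lattice_def space_def
  by (auto simp: smul_def fun_eq_iff algebra_simps)

lemma abs_diff_sgn_mult:
  fixes x y :: real
  assumes "\<bar>y\<bar> \<le> \<bar>x\<bar>"
  shows "\<bar>x - sgn x * sgn y * y\<bar> = \<bar>x\<bar> - \<bar>y\<bar>"
  using assms
  by (cases x "0::real" rule: linorder_cases; cases y "0::real" rule: linorder_cases) auto

text \<open>One step of the Euclidean algorithm on the coordinates of a lattice vector.\<close>

lemma lattice_aut_reduce_coord:
  assumes a: "a \<in> lattice d" and ij: "i < d" "j < d" "i \<noteq> j" and le: "\<bar>a j\<bar> \<le> \<bar>a i\<bar>"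
  shows "\<exists>U W. lattice_aut d U W \<and> U a \<in> lattice d \<and>
           (\<Sum>k<d. \<bar>U a k\<bar>) = (\<Sum>k<d. \<bar>a k\<bar>) - \<bar>a j\<bar>"
proof -
  define m where "m = - (sgn (a i) * sgn (a j))"
  have mI: "m \<in> \<int>" unfolding m_def by (simp add: sgn_real_def)
  define U where "U = (\<lambda>(x::vec) k. if k = i then x i + m * x j else x k)"
  define W where "W = (\<lambda>(x::vec) k. if k = i then x i - m * x j else x k)"
  have iso: "lattice_aut d U W" unfolding U_def W_def by (rule lattice_aut_add_multiple[OF ij mI])
  then have "U a \<in> lattice d" using a unfolding lattice_aut_def by blast
  moreover have "\<bar>U a i\<bar> = \<bar>a i\<bar> - \<bar>a j\<bar>"
    using abs_diff_sgn_mult[OF le] unfolding U_def m_def by (simp add: algebra_simps)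
  then have "(\<Sum>k<d. \<bar>U a k\<bar>) = (\<Sum>k<d. \<bar>a k\<bar>) - \<bar>a j\<bar>"
    using ij(1) by (simp add: sum.remove[of "{..<d}" i] U_def)
  ultimately show ?thesis using iso by blast
qed

lemma lattice_aut_single_coord:
  assumes d: "d \<ge> 1" and a: "a \<in> lattice d"
    and single: "\<And>i j. i < d \<Longrightarrow> j < d \<Longrightarrow> i \<noteq> j \<Longrightarrow> a i = 0 \<or> a j = 0"
  shows "\<exists>U W g. lattice_aut d U W \<and> g \<in> \<int> \<and> U a = smul g (unit_vec (d - 1))"
proof (cases "\<exists>i<d. a i \<noteq> 0")
  case True
  then obtain i where i: "i < d" "a i \<noteq> 0" by blast
  let ?U = "\<lambda>(x::vec) k. x (Transposition.transpose i (d - 1) k)"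
  have "lattice_aut d ?U ?U" by (rule lattice_aut_transpose) (use i d in auto)
  moreover have "?U a = smul (a i) (unit_vec (d - 1))"
  proof
    fix k
    show "?U a k = smul (a i) (unit_vec (d - 1)) k"
    proof (cases "k = d - 1")
      case False
      then have "Transposition.transpose i (d - 1) k \<noteq> i" by (auto simp: transpose_def)
      then have "a (Transposition.transpose i (d - 1) k) = 0"
        using single[OF _ i(1)] i lattice_coord_zero[OF a] not_less by blast
      then show ?thesis using False by (simp add: smul_def unit_vec_def)
    qed (simp add: smul_def unit_vec_def)
  qed
  moreover have "a i \<in> \<int>" using a lattice_coord_int by blast
  ultimately show ?thesis by blast
next
  case False
  then have "a = vzero" using lattice_coord_zero[OF a] by (metis not_less)
  then show ?thesis using lattice_aut_id by force
qed

lemma lattice_aut_to_axis_multiple: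
  assumes d: "d \<ge> 1" and a: "a \<in> lattice d"
  shows "\<exists>U W g. lattice_aut d U W \<and> g \<in> \<int> \<and> U a = smul g (unit_vec (d - 1))"
proof -
  have "\<exists>U W g. lattice_aut d U W \<and> g \<in> \<int> \<and> U a = smul g (unit_vec (d - 1))"
    if "a \<in> lattice d" "(\<Sum>k<d. \<bar>a k\<bar>) \<le> real n" for a n
    using that
  proof (induction n arbitrary: a rule: less_induct)
    case (less n)
    show ?case
    proof (cases "\<exists>i j. i < d \<and> j < d \<and> i \<noteq> j \<and> a i \<noteq> 0 \<and> a j \<noteq> 0")
      case True
      then obtain i j where ij: "i < d" "j < d" "i \<noteq> j" "a j \<noteq> 0" "\<bar>a j\<bar> \<le> \<bar>a i\<bar>"
        by (metis linorder_le_cases)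
      obtain U1 W1 where U1: "lattice_aut d U1 W1" "U1 a \<in> lattice d"
        "(\<Sum>k<d. \<bar>U1 a k\<bar>) = (\<Sum>k<d. \<bar>a k\<bar>) - \<bar>a j\<bar>"
        using lattice_aut_reduce_coord[OF less.prems(1) ij(1-3,5)] by blast
      have "1 \<le> \<bar>a j\<bar>" using ij(4) lattice_coord_int[OF less.prems(1)]
        by (simp add: Ints_nonzero_abs_ge1)
      then have "n \<ge> 1" "(\<Sum>k<d. \<bar>U1 a k\<bar>) \<le> real (n - 1)"
        using U1(3) less.prems(2) sum_nonneg[of "{..<d}" "\<lambda>k. \<bar>U1 a k\<bar>"] by auto
      then have "\<exists>U W g. lattice_aut d U W \<and> g \<in> \<int> \<and> U (U1 a) = smul g (unit_vec (d - 1))"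
        using less.IH[of "n - 1" "U1 a"] U1(2) by simp
      then show ?thesis using lattice_aut_comp[OF U1(1)] by blast
    next
      case False
      then show ?thesis using lattice_aut_single_coord[OF d less.prems(1)] by blast
    qed
  qed
  then show ?thesis using a real_arch_simple by blast
qed

lemma primitive_to_axis:
  assumes d: "d \<ge> 1" and v: "v \<in> lattice d" "primitive d v"
  shows "\<exists>U W. lattice_aut d U W \<and> U v = unit_vec (d - 1)"
proof -
  obtain U W g where UW: "lattice_aut d U W" "g \<in> \<int>" "U v = smul g (unit_vec (d - 1))"
    using lattice_aut_to_axis_multiple[OF d v(1)] by blast
  have "unit_vec (d - 1) \<in> lattice d" using d unfolding lattice_def space_def unit_vec_def by auto
  then have weL: "W (unit_vec (d - 1)) \<in> lattice d" by (rule lattice_autD(6)[OF UW(1)])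
  have "v = W (U v)" using lattice_autD(7)[OF UW(1)] v(1) lattice_subset_space by (metis subsetD)
  also have "\<dots> = smul g (W (unit_vec (d - 1)))"
    using lattice_autD(2)[OF UW(1)] UW(3) unfolding vlinear_def by simp
  finally have vW: "v = smul g (W (unit_vec (d - 1)))" .
  have g0: "g \<noteq> 0" using vW primitive_nonzero[OF v(2)] by auto
  then have "smul (1 / g) v \<in> lattice d" using vW weL by simp
  then have "1 / g \<in> \<int>" by (rule primitive_multiple_int[OF v])
  then have "\<bar>g\<bar> \<le> 1" using Ints_nonzero_abs_ge1[of "1 / g"] g0 by (simp add: abs_divide)
  then have "g = 1 \<or> g = -1" using Ints_nonzero_abs_ge1[OF UW(2) g0] by linarith
  then show ?thesis
  proof
    assume "g = 1"
    then show ?thesis using UW by auto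
  next
    assume gm: "g = -1"
    let ?N = "\<lambda>(x::vec) k. if k = d - 1 then - x k else x k"
    have "lattice_aut d (\<lambda>x. ?N (U x)) (\<lambda>x. W (?N x))"
      by (rule lattice_aut_comp[OF UW(1) lattice_aut_neg]) (use d in simp)
    moreover have "?N (U v) = unit_vec (d - 1)" using UW(3) gm by (auto simp: smul_def unit_vec_def)
    ultimately show ?thesis by blast
  qed
qed

section \<open>Projecting a simplicial cone along an extreme generator\<close>

lemma abs_sum_mult_le:
  fixes y g :: "'a \<Rightarrow> real"
  assumes "\<And>i. i \<in> I \<Longrightarrow> \<bar>y i\<bar> \<le> e"
  shows "\<bar>\<Sum>i\<in>I. y i * g i\<bar> \<le> e * (\<Sum>i\<in>I. \<bar>g i\<bar>)"
proof -
  have "\<bar>\<Sum>i\<in>I. y i * g i\<bar> \<le> (\<Sum>i\<in>I. \<bar>y i * g i\<bar>)" by (rule sum_abs)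
  also have "\<dots> \<le> (\<Sum>i\<in>I. e * \<bar>g i\<bar>)"
    by (rule sum_mono) (use assms in \<open>auto simp: abs_mult intro: mult_right_mono\<close>)
  also have "\<dots> = e * (\<Sum>i\<in>I. \<bar>g i\<bar>)" by (simp add: sum_distrib_left)
  finally show ?thesis .
qed

text \<open>
  The automorphism U moves the generator v 0 to the last unit vector; dropping the last
  coordinate of U x then gives a lattice-compatible projection of C onto a (d-1)-cone
  whose kernel is the line through v 0.
\<close>

locale cone_projection =
  fixes d :: nat and C :: "vec set" and v :: "nat \<Rightarrow> vec" and U W :: "vec \<Rightarrow> vec"
  assumes d1: "d \<ge> 1" and rat: "rational_cone d C" and fd: "full_dim d C" and simp: "simplicial d C"
    and inj: "inj_on v {..<d}" and gens: "v ` {..<d} = ext_gens d C"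
    and iso: "lattice_aut d U W" and Uv: "U (v 0) = unit_vec (d - 1)"
begin

definition proj :: "vec \<Rightarrow> vec" where
  "proj x = (\<lambda>i. if i < d - 1 then U x i else 0)"

definition axis_coord :: "vec \<Rightarrow> real" where
  "axis_coord x = U x (d - 1)"

lemmas U_linear = lattice_autD(1)[OF iso] and W_linear = lattice_autD(2)[OF iso]
  and U_space = lattice_autD(3)[OF iso] and W_space = lattice_autD(4)[OF iso]
  and U_lattice = lattice_autD(5)[OF iso] and W_lattice = lattice_autD(6)[OF iso]
  and W_U = lattice_autD(7)[OF iso] and U_W = lattice_autD(8)[OF iso]

lemma d0: "0 < d" using d1 by simp

lemma v_ext_gens: "j < d \<Longrightarrow> v j \<in> ext_gens d C"
  using gens by blast

lemma v_lattice: "j < d \<Longrightarrow> v j \<in> lattice d"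
  using v_ext_gens unfolding ext_gens_def by blast

lemma v_primitive: "j < d \<Longrightarrow> primitive d (v j)"
  using v_ext_gens unfolding ext_gens_primitive by blast

lemma v_extreme: "j < d \<Longrightarrow> extreme_ray C (v j)"
  using v_ext_gens unfolding ext_gens_def by blast

lemma v_nonzero: "j < d \<Longrightarrow> v j \<noteq> vzero"
  using v_extreme unfolding extreme_ray_def by blast

lemma v_space: "j < d \<Longrightarrow> v j \<in> space d"
  using v_lattice lattice_subset_space by blast

lemma C_eq: "C = pos_hull (v ` {..<d})"
  using rational_cone_ext_gens[OF rat] gens by simp

lemma v_in_C: "j < d \<Longrightarrow> v j \<in> C"
  unfolding C_eq by (rule pos_hull_base) simp

lemma C_space: "C \<subseteq> space d"
  unfolding C_eq by (rule pos_hull_subset_space) (use v_space in auto)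

lemma C_coords: "x \<in> C \<Longrightarrow> \<exists>a. (\<forall>j. a j \<ge> 0) \<and> x = lincomb {..<d} a v"
proof -
  assume "x \<in> C"
  then obtain c where c: "\<forall>u\<in>v ` {..<d}. c u \<ge> 0" "x = lincomb (v ` {..<d}) c (\<lambda>u. u)"
    using pos_hull_finite_coeffs[of "v ` {..<d}" x] C_eq by auto
  have "x = lincomb {..<d} (c \<circ> v) v"
    using c(2) lincomb_reindex[OF inj, of c "\<lambda>u. u"] by (simp add: comp_def)
  also have "\<dots> = lincomb {..<d} (\<lambda>j. if j < d then c (v j) else 0) v" by (rule lincomb_cong) auto
  finally show ?thesis using c(1) by (intro exI[of _ "\<lambda>j. if j < d then c (v j) else 0"]) auto
qed

lemma lincomb_v_in_C: "(\<And>j. j < d \<Longrightarrow> a j \<ge> 0) \<Longrightarrow> lincomb {..<d} a v \<in> C"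
  unfolding C_eq by (rule pos_hull_lincomb) (auto intro: pos_hull_base)

lemma lincomb_v_space: "lincomb {..<d} a v \<in> space d"
  by (rule space_lincomb) (auto intro: v_space)

lemma v_coeffs_unique:
  assumes "lincomb {..<d} a v = lincomb {..<d} b v" "j < d"
  shows "a j = b j"
proof -
  have li: "lin_indep (v ` {..<d})" using simp gens unfolding simplicial_def by simp
  show ?thesis by (rule lin_indep_image_coeffs_unique[OF li inj _ assms(1)]) (use assms in auto)
qed

lemma v0_lincomb: "v 0 = lincomb {..<d} (\<lambda>j. if j = 0 then 1 else 0) v"
  using lincomb_single[of "{..<d}" 0 "\<lambda>j. if j = 0 then 1 else 0" v] d0 by simp

lemma unit_vec_coords:
  assumes "i < d"
  shows "\<exists>g. unit_vec i = lincomb {..<d} g v"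
proof -
  have "unit_vec i \<in> space d" using assms unfolding space_def unit_vec_def by auto
  then have "unit_vec i \<in> lin_span C" using fd unfolding full_dim_def by blast
  moreover have "lin_span C \<subseteq> lin_span (v ` {..<d})"
    using C_eq pos_hull_subset_lin_span lin_span_trans by metis
  ultimately obtain c where "unit_vec i = lincomb (v ` {..<d}) c (\<lambda>u. u)"
    using lin_span_finite_coeffs by blast
  then have "unit_vec i = lincomb {..<d} (c \<circ> v) v"
    using lincomb_reindex[OF inj, of c "\<lambda>u. u"] by (simp add: comp_def)
  then show ?thesis by blast
qed

lemma proj_linear: "vlinear proj"
  using U_linear unfolding vlinear_def proj_def by (auto simp: smul_def fun_eq_iff)

lemma proj_add: "proj (\<lambda>i. x i + y i) = (\<lambda>i. proj x i + proj y i)"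
  using proj_linear unfolding vlinear_def by blast

lemma proj_smul: "proj (smul t x) = smul t (proj x)"
  using proj_linear unfolding vlinear_def by blast

lemma proj_lincomb: "finite I \<Longrightarrow> proj (lincomb I a w) = lincomb I a (\<lambda>j. proj (w j))"
  by (erule vlinear_lincomb[OF proj_linear])

lemma axis_coord_add: "axis_coord (\<lambda>i. x i + y i) = axis_coord x + axis_coord y"
  using U_linear unfolding vlinear_def axis_coord_def by simp

lemma axis_coord_lincomb:
  "finite I \<Longrightarrow> axis_coord (lincomb I a w) = (\<Sum>j\<in>I. a j * axis_coord (w j))"
  unfolding axis_coord_def by (simp add: vlinear_lincomb[OF U_linear] lincomb_apply)

lemma proj_v0: "proj (v 0) = vzero" and axis_coord_v0: "axis_coord (v 0) = 1"
  using Uv d1 unfolding proj_def axis_coord_def unit_vec_def by (auto simp: fun_eq_iff)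

lemma W_unit_vec: "W (unit_vec (d - 1)) = v 0"
  using W_U[OF v_space[OF d0]] Uv by simp

lemma proj_decomp:
  assumes "x \<in> space d"
  shows "x = (\<lambda>i. W (proj x) i + axis_coord x * v 0 i)"
proof -
  have "U x = (\<lambda>i. proj x i + smul (axis_coord x) (unit_vec (d - 1)) i)"
  proof
    fix i
    show "U x i = proj x i + smul (axis_coord x) (unit_vec (d - 1)) i"
      using U_space[OF assms] d1 unfolding space_def
      by (cases i "d - 1" rule: linorder_cases)
        (auto simp: proj_def smul_def unit_vec_def axis_coord_def)
  qed
  then have "W (U x) = (\<lambda>i. W (proj x) i + W (smul (axis_coord x) (unit_vec (d - 1))) i)"
    using W_linear unfolding vlinear_def by metis
  then show ?thesis
    using W_U[OF assms] W_linear W_unit_vec unfolding vlinear_def by (simp add: smul_def)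
qed

lemma proj_lattice: "x \<in> lattice d \<Longrightarrow> proj x \<in> lattice (d - 1)"
  using U_lattice[of x] unfolding lattice_def space_def proj_def by auto

lemma proj_W:
  assumes "y \<in> space (d - 1)"
  shows "proj (W y) = y"
proof -
  have "U (W y) = y" using U_W space_mono[of "d - 1" d] assms by auto
  then show ?thesis using assms unfolding proj_def space_def by (auto simp: fun_eq_iff)
qed

lemma proj_kernel:
  assumes "x \<in> space d" "proj x = vzero"
  shows "x = smul (axis_coord x) (v 0)"
  using proj_decomp[OF assms(1)] assms(2) vlinear_zero[OF W_linear] by (simp add: smul_def)

lemma proj_v_coeffs_unique:
  assumes eq: "lincomb {..<d} a (\<lambda>j. proj (v j)) = lincomb {..<d} b (\<lambda>j. proj (v j))"
    and k: "0 < k" "k < d"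
  shows "a k = b k"
proof -
  define z where "z = lincomb {..<d} (\<lambda>j. a j - b j) v"
  have "proj z = lincomb {..<d} (\<lambda>j. a j - b j) (\<lambda>j. proj (v j))"
    unfolding z_def by (rule proj_lincomb) simp
  also have "\<dots> = vzero" using eq lincomb_diff[of "{..<d}" a "\<lambda>j. proj (v j)" b, symmetric] by simp
  finally have "z = smul (axis_coord z) (v 0)" using proj_kernel lincomb_v_space unfolding z_def
    by blast
  also have "\<dots> = lincomb {..<d} (\<lambda>j. if j = 0 then axis_coord z else 0) v"
    using lincomb_single[of "{..<d}" 0 "\<lambda>j. if j = 0 then axis_coord z else 0" v] d0 by simp
  finally have "a k - b k = (if k = 0 then axis_coord z else 0)"
    using v_coeffs_unique[OF _ k(2)] unfolding z_def by blast
  then show ?thesis using k by simp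
qed

definition C_proj :: "vec set" where
  "C_proj = proj ` C"

lemma C_proj_coords:
  assumes "y \<in> C_proj"
  shows "\<exists>a. (\<forall>j. a j \<ge> 0) \<and> y = lincomb {..<d} a (\<lambda>j. proj (v j))"
proof -
  obtain x where x: "x \<in> C" "y = proj x" using assms unfolding C_proj_def by blast
  obtain a where a: "\<forall>j. a j \<ge> 0" "x = lincomb {..<d} a v" using C_coords[OF x(1)] by blast
  show ?thesis using a x proj_lincomb[of "{..<d}" a v] by auto
qed

lemma C_proj_eq: "C_proj = pos_hull (proj ` v ` {..<d})"
  using vlinear_image_pos_hull[OF proj_linear, of "v ` {..<d}"] C_eq unfolding C_proj_def by simp

lemma C_proj_rational: "rational_cone (d - 1) C_proj"
  unfolding rational_cone_def
proof (intro conjI allI impI)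
  show "\<exists>S. finite S \<and> S \<subseteq> lattice (d - 1) \<and> C_proj = pos_hull S"
    using C_proj_eq proj_lattice v_lattice by (intro exI[of _ "proj ` v ` {..<d}"]) auto
next
  fix y assume y: "y \<in> C_proj \<and> smul (-1) y \<in> C_proj"
  obtain x1 where x1: "x1 \<in> C" "y = proj x1" using y unfolding C_proj_def by blast
  obtain x2 where x2: "x2 \<in> C" "smul (-1) y = proj x2" using y unfolding C_proj_def by blast
  let ?z = "\<lambda>i. x1 i + x2 i"
  have zC: "?z \<in> C" using rational_cone_add[OF rat x1(1) x2(1)] .
  have "proj ?z = vzero"
  proof
    fix i
    have "proj x2 i = - y i" using fun_cong[OF x2(2), of i] by (simp add: smul_def)
    then show "proj ?z i = 0" using proj_add[of x1 x2] x1(2) by simp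
  qed
  then have zeq: "?z = smul (axis_coord ?z) (v 0)" using proj_kernel zC C_space by blast
  show "y = vzero"
  proof (cases "axis_coord ?z \<ge> 0")
    case True
    then obtain s where "x1 = smul s (v 0)"
      using extreme_rayD[OF v_extreme[OF d0] x1(1) x2(1) True zeq] by blast
    then show ?thesis using x1(2) proj_smul proj_v0 by simp
  next
    case False
    text \<open>Otherwise -v 0 lies in C, which is pointed.\<close>
    define t where "t = axis_coord ?z"
    have t: "t < 0" using False unfolding t_def by simp
    have zt: "?z = smul t (v 0)" using zeq unfolding t_def .
    have "smul (- 1 / t) ?z \<in> C" using t zC rational_cone_smul[OF rat] by simp
    moreover have "smul (- 1 / t) ?z = smul (-1) (v 0)" unfolding zt using t by simp
    ultimately have "v 0 = vzero" using v_in_C[OF d0] rat unfolding rational_cone_def by metis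
    then show ?thesis using v_nonzero[OF d0] by simp
  qed
qed

lemma C_proj_full_dim: "full_dim (d - 1) C_proj"
  unfolding full_dim_def
proof
  fix y assume y: "y \<in> space (d - 1)"
  have "W y \<in> space d" using W_space space_mono[of "d - 1" d] y by auto
  then have "W y \<in> lin_span C" using fd unfolding full_dim_def by blast
  then obtain T c where T: "finite T" "T \<subseteq> C" "W y = lincomb T c (\<lambda>v. v)"
    unfolding lin_span_coeff_span coeff_span_def by blast
  have "y = proj (W y)" using proj_W[OF y] by simp
  also have "\<dots> = lincomb T c (\<lambda>t. proj t)" using T proj_lincomb by simp
  also have "\<dots> \<in> lin_span C_proj"
    by (rule lin_span_lincomb[OF T(1)]) (use T in \<open>auto simp: C_proj_def intro!: lin_span_base\<close>)
  finally show "y \<in> lin_span C_proj" .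
qed

definition proj_simplex :: "real \<Rightarrow> vec set" where
  "proj_simplex r = {lincomb {..<d} mu (\<lambda>j. proj (v j)) | mu. (\<forall>j. mu j \<ge> 0) \<and> (\<Sum>j<d. mu j) \<le> r}"

lemma ext_gens_C_proj_simplex: "ext_gens (d - 1) C_proj \<subseteq> proj_simplex 1"
proof
  fix u assume u: "u \<in> ext_gens (d - 1) C_proj"
  have sub: "proj ` v ` {..<d} \<subseteq> C_proj" using v_in_C unfolding C_proj_def by blast
  have fin: "finite (proj ` v ` {..<d})" by simp
  obtain q r where q: "q \<in> proj ` v ` {..<d}" "r > 0" "u = smul r q"
    using ext_gen_multiple_of_generator[OF C_proj_rational fin C_proj_eq sub u] by blast
  then obtain j where j: "j < d" "q = proj (v j)" by blast
  have "r \<le> 1"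
  proof (rule ccontr)
    assume "\<not> r \<le> 1"
    then have "0 < 1 / r \<and> 1 / r < 1" using q(2) by (simp add: divide_less_eq)
    moreover have "primitive (d - 1) u" using u unfolding ext_gens_primitive by blast
    moreover have "smul (1 / r) u \<in> lattice (d - 1)"
      using q(2,3) j(2) proj_lattice[OF v_lattice[OF j(1)]] by simp
    ultimately show False unfolding primitive_def by blast
  qed
  have "u = lincomb {..<d} (\<lambda>k. if k = j then r else 0) (\<lambda>j. proj (v j))"
    using lincomb_single[of "{..<d}" j "\<lambda>k. if k = j then r else 0" "\<lambda>j. proj (v j)"] q j by simp
  moreover have "(\<Sum>k<d. (if k = j then r else 0)) \<le> 1" using j \<open>r \<le> 1\<close> by simp
  ultimately show "u \<in> proj_simplex 1"
    unfolding proj_simplex_def using q(2) by (auto intro!: exI[of _ "\<lambda>k. if k = j then r else 0"])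
qed

lemma proj_simplex_convex:
  assumes T: "finite T" "T \<subseteq> proj_simplex 1" and lam: "\<forall>t\<in>T. lam t \<ge> 0" "(\<Sum>t\<in>T. lam t) = 1"
  shows "lincomb T lam (\<lambda>u. u) \<in> proj_simplex 1"
proof -
  have "\<forall>t\<in>T. \<exists>mu. (\<forall>j. mu j \<ge> 0) \<and> (\<Sum>j<d. mu j) \<le> 1 \<and> t = lincomb {..<d} mu (\<lambda>j. proj (v j))"
    using T(2) unfolding proj_simplex_def by blast
  then obtain mu where mu: "\<forall>t\<in>T.
      (\<forall>j. mu t j \<ge> 0) \<and> (\<Sum>j<d. mu t j) \<le> 1 \<and> t = lincomb {..<d} (mu t) (\<lambda>j. proj (v j))"
    by (rule bchoice[elim_format]) blast
  have "lincomb T lam (\<lambda>u. u) = lincomb T lam (\<lambda>t. lincomb {..<d} (mu t) (\<lambda>j. proj (v j)))"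
    by (rule lincomb_cong) (use mu in auto)
  also have "\<dots> = lincomb {..<d} (\<lambda>j. \<Sum>t\<in>T. lam t * mu t j) (\<lambda>j. proj (v j))"
    by (rule lincomb_swap[OF T(1)]) simp
  finally have eq: "lincomb T lam (\<lambda>u. u) = \<dots>" .
  have "(\<Sum>j<d. \<Sum>t\<in>T. lam t * mu t j) = (\<Sum>t\<in>T. lam t * (\<Sum>j<d. mu t j))"
    by (simp add: sum.swap[of _ "{..<d}" T] sum_distrib_left)
  also have "\<dots> \<le> (\<Sum>t\<in>T. lam t * 1)"
    by (rule sum_mono, rule mult_left_mono) (use mu lam in auto)
  finally have "(\<Sum>j<d. \<Sum>t\<in>T. lam t * mu t j) \<le> 1" using lam(2) by simp
  moreover have "\<forall>j. (\<Sum>t\<in>T. lam t * mu t j) \<ge> 0" using mu lam by (auto intro!: sum_nonneg)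
  ultimately show ?thesis unfolding proj_simplex_def using eq by blast
qed

lemma Delta_C_proj_simplex: "Delta (d - 1) C_proj \<subseteq> proj_simplex 1"
proof
  fix y assume "y \<in> Delta (d - 1) C_proj"
  then obtain T lam where T: "finite T" "T \<subseteq> insert vzero (ext_gens (d - 1) C_proj)"
    "\<forall>t\<in>T. lam t \<ge> 0" "(\<Sum>t\<in>T. lam t) = 1" "y = lincomb T lam (\<lambda>v. v)"
    unfolding Delta_def convex_hull_v_def lincomb_def by blast
  have "vzero \<in> proj_simplex 1"
    unfolding proj_simplex_def by (rule CollectI, rule exI[of _ "\<lambda>_. 0"]) (simp add: lincomb_def)
  then have "T \<subseteq> proj_simplex 1" using T(2) ext_gens_C_proj_simplex by blast
  then show "y \<in> proj_simplex 1" using proj_simplex_convex T by simp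
qed

lemma scale_proj_simplex:
  assumes "r \<ge> 0"
  shows "scale_set r (proj_simplex 1) \<subseteq> proj_simplex r"
proof
  fix y assume "y \<in> scale_set r (proj_simplex 1)"
  then obtain mu where mu: "\<forall>j. mu j \<ge> 0" "(\<Sum>j<d. mu j) \<le> 1"
    "y = smul r (lincomb {..<d} mu (\<lambda>j. proj (v j)))"
    unfolding scale_set_def proj_simplex_def by blast
  have "y = lincomb {..<d} (\<lambda>j. r * mu j) (\<lambda>j. proj (v j))" using mu(3) lincomb_smul by simp
  moreover have "(\<Sum>j<d. r * mu j) \<le> r"
    using mu(2) assms by (simp add: sum_distrib_left[symmetric] mult_left_le)
  moreover have "\<forall>j. r * mu j \<ge> 0" using mu(1) assms by simp
  ultimately show "y \<in> proj_simplex r" unfolding proj_simplex_def by blast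
qed

lemma lincomb_in_scaled_Delta:
  assumes xi: "\<forall>j. xi j \<ge> 0" and R: "(\<Sum>j<d. xi j) \<le> R" "R > 0"
  shows "lincomb {..<d} xi v \<in> scale_set R (Delta d C)"
proof -
  have "vzero \<notin> v ` {..<d}" using v_nonzero by (metis imageE lessThan_iff)
  then have "lincomb {..<d} (\<lambda>j. xi j / R) v \<in> Delta d C"
    unfolding Delta_def gens[symmetric] using xi R
    by (intro lincomb_in_convex_hull_insert_zero[OF _ inj])
      (auto simp: sum_divide_distrib[symmetric])
  moreover have "lincomb {..<d} xi v = smul R (lincomb {..<d} (\<lambda>j. xi j / R) v)"
    unfolding lincomb_smul using R by simp
  ultimately show ?thesis unfolding scale_set_def by blast
qed

definition good_lift :: "real \<Rightarrow> vec \<Rightarrow> vec \<Rightarrow> bool" where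
  "good_lift r e w \<longleftrightarrow> w \<in> lattice d \<and> proj w = e \<and>
     (\<exists>xi. w = lincomb {..<d} xi v \<and> (\<forall>j. xi j \<ge> 0) \<and> xi 0 < 1 \<and> (\<Sum>j<d. xi j) \<le> r + 1)"

lemma lattice_shift_along_v0:
  assumes z: "z \<in> space d" and e: "proj z \<in> lattice (d - 1)"
  defines "f \<equiv> of_int \<lceil>axis_coord z\<rceil> - axis_coord z"
  shows "(\<lambda>i. z i + f * v 0 i) \<in> lattice d" and "proj (\<lambda>i. z i + f * v 0 i) = proj z"
proof -
  have "(\<lambda>i. z i + f * v 0 i) = (\<lambda>i. W (proj z) i + smul (of_int \<lceil>axis_coord z\<rceil>) (v 0) i)"
    using proj_decomp[OF z] unfolding f_def smul_def by (auto simp: fun_eq_iff algebra_simps)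
  moreover have "W (proj z) \<in> lattice d" using W_lattice lattice_mono[of "d - 1" d] e by auto
  moreover have "smul (of_int \<lceil>axis_coord z\<rceil>) (v 0) \<in> lattice d"
    using lattice_smul_int v_lattice[OF d0] by simp
  ultimately show "(\<lambda>i. z i + f * v 0 i) \<in> lattice d" by (simp add: lattice_add)
  have "proj (\<lambda>i. z i + f * v 0 i) = (\<lambda>i. proj z i + proj (smul f (v 0)) i)"
    using proj_add[of z "smul f (v 0)"] by (simp add: smul_def)
  then show "proj (\<lambda>i. z i + f * v 0 i) = proj z" using proj_smul proj_v0 by simp
qed

lemma good_lift_exists:
  assumes "e \<in> proj_simplex r" "e \<in> lattice (d - 1)"
  shows "\<exists>w. good_lift r e w"
proof -
  obtain mu where mu: "\<forall>j. mu j \<ge> 0" "(\<Sum>j<d. mu j) \<le> r" "e = lincomb {..<d} mu (\<lambda>j. proj (v j))"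
    using assms(1) unfolding proj_simplex_def by blast
  define mu' where "mu' j = (if j = 0 then 0 else mu j)" for j
  define z where "z = lincomb {..<d} mu' v"
  have "proj z = lincomb {..<d} mu' (\<lambda>j. proj (v j))" unfolding z_def by (simp add: proj_lincomb)
  also have "\<dots> = e" unfolding mu(3) by (rule lincomb_cong) (auto simp: mu'_def proj_v0)
  finally have prz: "proj z = e" .
  define f where "f = of_int \<lceil>axis_coord z\<rceil> - axis_coord z"
  have f: "0 \<le> f" "f < 1" unfolding f_def by linarith+
  define xi where "xi j = mu' j + (if j = 0 then f else 0)" for j
  have "(\<lambda>i. z i + f * v 0 i) = lincomb {..<d} xi v"
  proof
    fix i
    have "lincomb {..<d} xi v i =
        lincomb {..<d} mu' v i + lincomb {..<d} (\<lambda>j. if j = 0 then f else 0) v i"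
      unfolding xi_def lincomb_apply by (simp add: distrib_right sum.distrib)
    also have "lincomb {..<d} (\<lambda>j. if j = 0 then f else 0) v = smul f (v 0)"
      using lincomb_single[of "{..<d}" 0 "\<lambda>j. if j = 0 then f else 0" v] d0 by simp
    finally show "z i + f * v 0 i = lincomb {..<d} xi v i" unfolding z_def by (simp add: smul_def)
  qed
  moreover have "\<forall>j. xi j \<ge> 0" "xi 0 < 1" using mu(1) f unfolding xi_def mu'_def by auto
  moreover have "(\<Sum>j<d. xi j) \<le> r + 1"
  proof -
    have "(\<Sum>j<d. xi j) = (\<Sum>j<d. mu' j) + f" unfolding xi_def using d0 by (simp add: sum.distrib)
    moreover have "(\<Sum>j<d. mu' j) \<le> (\<Sum>j<d. mu j)"
      unfolding mu'_def by (rule sum_mono) (use mu(1) in auto)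
    ultimately show ?thesis using mu(2) f by linarith
  qed
  ultimately show ?thesis
    using lattice_shift_along_v0[of z] lincomb_v_space assms(2) prz
    unfolding good_lift_def f_def z_def by metis
qed

definition lift :: "real \<Rightarrow> vec \<Rightarrow> vec" where
  "lift r e = (SOME w. good_lift r e w)"

lemma coeff_near_v0:
  assumes gam: "\<And>i. i < d \<Longrightarrow> unit_vec i = lincomb {..<d} (gam i) v"
    and x: "x = lincomb {..<d} xi v"
    and cl: "\<forall>i<d. \<bar>x i - v 0 i\<bar> \<le> e" and k: "0 < k" "k < d"
  shows "\<bar>xi k\<bar> \<le> e * (\<Sum>i<d. \<bar>gam i k\<bar>)"
proof -
  define y where "y = (\<lambda>i. x i - v 0 i)"
  have ys: "y \<in> space d" using lincomb_v_space x v_space[OF d0] unfolding y_def space_def by auto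
  have "y = lincomb {..<d} (\<lambda>i. y i) unit_vec" by (rule space_unit_vec_expansion[OF ys])
  also have "\<dots> = lincomb {..<d} (\<lambda>i. y i) (\<lambda>i. lincomb {..<d} (gam i) v)"
    by (rule lincomb_cong) (simp add: gam)
  also have "\<dots> = lincomb {..<d} (\<lambda>k. \<Sum>i<d. y i * gam i k) v" by (rule lincomb_swap) auto
  finally have y1: "y = lincomb {..<d} (\<lambda>k. \<Sum>i<d. y i * gam i k) v" .
  have y2: "y = lincomb {..<d} (\<lambda>j. xi j - (if j = 0 then 1 else 0)) v"
    unfolding y_def using x v0_lincomb lincomb_diff[of "{..<d}" xi v] by simp
  have "xi k - (if k = 0 then 1 else 0) = (\<Sum>i<d. y i * gam i k)"
    by (rule v_coeffs_unique[OF _ k(2)]) (use y1 y2 in simp)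
  then have "xi k = (\<Sum>i<d. y i * gam i k)" using k by simp
  also have "\<bar>\<dots>\<bar> \<le> e * (\<Sum>i<d. \<bar>gam i k\<bar>)"
    by (rule abs_sum_mult_le) (use cl in \<open>simp add: y_def\<close>)
  finally show ?thesis .
qed

lemma axis_coord_near_v0:
  assumes xs: "x \<in> space d" and cl: "\<forall>i<d. \<bar>x i - v 0 i\<bar> \<le> e"
  shows "axis_coord x \<ge> 1 - e * (\<Sum>i<d. \<bar>axis_coord (unit_vec i)\<bar>)"
proof -
  define y where "y = (\<lambda>i. x i - v 0 i)"
  have ys: "y \<in> space d" using xs v_space[OF d0] unfolding y_def space_def by auto
  have "x = (\<lambda>i. v 0 i + y i)" unfolding y_def by simp
  then have "axis_coord x = axis_coord (v 0) + axis_coord y" using axis_coord_add by metis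
  also have "axis_coord y = axis_coord (lincomb {..<d} (\<lambda>i. y i) unit_vec)"
    using space_unit_vec_expansion[OF ys] by simp
  also have "\<dots> = (\<Sum>i<d. y i * axis_coord (unit_vec i))" by (rule axis_coord_lincomb) simp
  finally have tx: "axis_coord x = 1 + (\<Sum>i<d. y i * axis_coord (unit_vec i))"
    using axis_coord_v0 by simp
  have "\<bar>\<Sum>i<d. y i * axis_coord (unit_vec i)\<bar> \<le> e * (\<Sum>i<d. \<bar>axis_coord (unit_vec i)\<bar>)"
    by (rule abs_sum_mult_le) (use cl in \<open>simp add: y_def\<close>)
  then show ?thesis using tx by linarith
qed

lemma near_v0_bounds:
  obtains K where "K \<ge> 0"
    "\<And>x xi e. x = lincomb {..<d} xi v \<Longrightarrow> \<forall>i<d. \<bar>x i - v 0 i\<bar> \<le> e \<Longrightarrow>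
       (\<Sum>k\<in>{1..<d}. xi k) \<le> e * K \<and> 1 - e * K \<le> axis_coord x"
proof -
  obtain gam where gam: "\<And>i. i < d \<Longrightarrow> unit_vec i = lincomb {..<d} (gam i) v"
    using unit_vec_coords by metis
  define K1 where "K1 = (\<Sum>k<d. \<Sum>i<d. \<bar>gam i k\<bar>)"
  define K2 where "K2 = (\<Sum>i<d. \<bar>axis_coord (unit_vec i)\<bar>)"
  have K: "0 \<le> K1" "0 \<le> K2" unfolding K1_def K2_def by (auto intro: sum_nonneg)
  show ?thesis
  proof (rule that[of "K1 + K2"])
    show "0 \<le> K1 + K2" using K by simp
  next
    fix x xi e assume x: "x = lincomb {..<d} xi v" and cl: "\<forall>i<d. \<bar>x i - v 0 i\<bar> \<le> e"
    have "\<bar>x 0 - v 0 0\<bar> \<le> e" using cl d0 by blast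
    then have e: "0 \<le> e" using abs_ge_zero[of "x 0 - v 0 0"] by linarith
    have "(\<Sum>k\<in>{1..<d}. xi k) \<le> (\<Sum>k\<in>{1..<d}. e * (\<Sum>i<d. \<bar>gam i k\<bar>))"
    proof (rule sum_mono)
      fix k assume "k \<in> {1..<d}"
      then have "\<bar>xi k\<bar> \<le> e * (\<Sum>i<d. \<bar>gam i k\<bar>)" using coeff_near_v0[OF gam x cl, of k] by simp
      then show "xi k \<le> e * (\<Sum>i<d. \<bar>gam i k\<bar>)" using abs_ge_self[of "xi k"] by linarith
    qed
    also have "\<dots> \<le> (\<Sum>k<d. e * (\<Sum>i<d. \<bar>gam i k\<bar>))"
      by (rule sum_mono2) (use e in \<open>auto intro!: mult_nonneg_nonneg sum_nonneg\<close>)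
    also have "\<dots> = e * K1" unfolding K1_def by (simp add: sum_distrib_left)
    also have "\<dots> \<le> e * (K1 + K2)" using e K by (simp add: mult_left_mono)
    finally have sum: "(\<Sum>k\<in>{1..<d}. xi k) \<le> e * (K1 + K2)" .
    have "1 - e * K2 \<le> axis_coord x"
      using axis_coord_near_v0[OF _ cl] x lincomb_v_space unfolding K2_def by blast
    moreover have "0 \<le> e * K1" using e K by simp
    ultimately have "1 - e * (K1 + K2) \<le> axis_coord x" by (simp add: algebra_simps)
    then show "(\<Sum>k\<in>{1..<d}. xi k) \<le> e * (K1 + K2) \<and> 1 - e * (K1 + K2) \<le> axis_coord x"
      using sum by blast
  qed
qed

text \<open>
  The sum of the coefficients at v 1, ..., v (d-1) is a linear functional on C_proj, well
  defined by proj_v_coeffs_unique; it is positive away from 0.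
\<close>

lemma C_proj_height_pos:
  assumes "y \<noteq> vzero" "\<forall>j. 0 \<le> beta j" "y = lincomb {..<d} beta (\<lambda>j. proj (v j))"
  shows "0 < (\<Sum>j\<in>{1..<d}. beta j)"
proof (rule ccontr)
  assume "\<not> 0 < (\<Sum>j\<in>{1..<d}. beta j)"
  moreover have "0 \<le> (\<Sum>j\<in>{1..<d}. beta j)" using assms(2) by (simp add: sum_nonneg)
  ultimately have "(\<Sum>j\<in>{1..<d}. beta j) = 0" by simp
  then have z: "\<forall>j\<in>{1..<d}. beta j = 0" using assms(2) by (simp add: sum_nonneg_eq_0_iff)
  have "y = lincomb {..<d} (\<lambda>_. 0) (\<lambda>j. proj (v j))"
    unfolding assms(3) by (rule lincomb_cong) (use z proj_v0 in \<open>auto simp: Suc_le_eq\<close>)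
  then show False using assms(1) by (simp add: lincomb_def)
qed

lemma height_lower_bound:
  assumes F: "finite F" "F \<subseteq> C_proj" "vzero \<notin> F"
  obtains \<delta> where "\<delta> > 0"
    "\<And>E a xi. E \<subseteq> F \<Longrightarrow> \<forall>e\<in>E. 0 \<le> a e \<Longrightarrow> proj (lincomb {..<d} xi v) = lincomb E a (\<lambda>u. u) \<Longrightarrow>
       \<delta> * (\<Sum>e\<in>E. a e) \<le> (\<Sum>k\<in>{1..<d}. xi k)"
proof -
  have "\<forall>e\<in>F. \<exists>b. (\<forall>j. b j \<ge> 0) \<and> e = lincomb {..<d} b (\<lambda>j. proj (v j))"
    using F(2) C_proj_coords by blast
  then obtain beta where beta: "\<And>e. e \<in> F \<Longrightarrow>
      (\<forall>j. beta e j \<ge> 0) \<and> e = lincomb {..<d} (beta e) (\<lambda>j. proj (v j))"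
    by metis
  define B where "B e = (\<Sum>j\<in>{1..<d}. beta e j)" for e
  have Bpos: "B e > 0" if "e \<in> F" for e
  proof -
    have "e \<noteq> vzero" using F(3) that by blast
    then show ?thesis unfolding B_def using C_proj_height_pos beta[OF that] by blast
  qed
  define \<delta> where "\<delta> = Min (insert 1 (B ` F))"
  have \<delta>: "\<delta> > 0" unfolding \<delta>_def using F(1) Bpos by (auto simp: Min_gr_iff)
  have \<delta>_le: "\<delta> \<le> B e" if "e \<in> F" for e unfolding \<delta>_def using F(1) that by (auto intro: Min_le)
  show ?thesis
  proof (rule that[OF \<delta>])
    fix E a xi assume E: "E \<subseteq> F" and a: "\<forall>e\<in>E. 0 \<le> a e"
      and eq: "proj (lincomb {..<d} xi v) = lincomb E a (\<lambda>u. u)"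
    have finE: "finite E" using E F(1) finite_subset by blast
    have "lincomb {..<d} xi (\<lambda>j. proj (v j)) = proj (lincomb {..<d} xi v)"
      by (simp add: proj_lincomb)
    also have "\<dots> = lincomb E a (\<lambda>e. lincomb {..<d} (beta e) (\<lambda>j. proj (v j)))"
      unfolding eq by (rule lincomb_cong) (use beta E in auto)
    also have "\<dots> = lincomb {..<d} (\<lambda>j. \<Sum>e\<in>E. a e * beta e j) (\<lambda>j. proj (v j))"
      by (rule lincomb_swap[OF finE]) simp
    finally have eqc: "lincomb {..<d} xi (\<lambda>j. proj (v j)) =
        lincomb {..<d} (\<lambda>j. \<Sum>e\<in>E. a e * beta e j) (\<lambda>j. proj (v j))" .
    have "xi k = (\<Sum>e\<in>E. a e * beta e k)" if "k \<in> {1..<d}" for k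
      using proj_v_coeffs_unique[OF eqc] that by simp
    then have "(\<Sum>k\<in>{1..<d}. xi k) = (\<Sum>k\<in>{1..<d}. \<Sum>e\<in>E. a e * beta e k)" by simp
    also have "\<dots> = (\<Sum>e\<in>E. a e * B e)" unfolding B_def sum_distrib_left by (rule sum.swap)
    finally have "(\<Sum>k\<in>{1..<d}. xi k) = (\<Sum>e\<in>E. a e * B e)" .
    moreover have "(\<Sum>e\<in>E. a e * \<delta>) \<le> (\<Sum>e\<in>E. a e * B e)"
      by (rule sum_mono) (use a \<delta>_le E in \<open>auto intro: mult_left_mono\<close>)
    ultimately show "\<delta> * (\<Sum>e\<in>E. a e) \<le> (\<Sum>k\<in>{1..<d}. xi k)"
      by (simp add: sum_distrib_left mult.commute)
  qed
qed

end

locale lifted_cone = cone_projection +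
  fixes r :: real and Dp :: "vec set"
  assumes uniDp: "unimodular (d - 1) Dp" and hbDp: "hilb (d - 1) Dp \<subseteq> proj_simplex r"
begin

abbreviation "E \<equiv> ext_gens (d - 1) Dp"
abbreviation "L \<equiv> lift r ` E"
abbreviation "G \<equiv> insert (v 0) L"

lemma Dp_rational: "rational_cone (d - 1) Dp"
  using uniDp unfolding unimodular_def simplicial_def by blast

lemma finite_E: "finite E" and Dp_eq: "Dp = pos_hull E"
  using rational_cone_ext_gens[OF Dp_rational] by auto

lemma lin_indep_E: "lin_indep E"
  using uniDp unfolding unimodular_def simplicial_def by blast

lemma unimodular_E: "lattice (d - 1) \<inter> lin_span E \<subseteq> int_span E"
  using uniDp unfolding unimodular_def by blast

lemma E_lattice: "e \<in> E \<Longrightarrow> e \<in> lattice (d - 1)"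
  unfolding ext_gens_def by blast

lemma E_primitive: "e \<in> E \<Longrightarrow> primitive (d - 1) e"
  unfolding ext_gens_primitive by blast

lemma E_nonzero: "e \<in> E \<Longrightarrow> e \<noteq> vzero"
  unfolding ext_gens_def extreme_ray_def by blast

lemma good_lift_E:
  assumes "e \<in> E"
  shows "good_lift r e (lift r e)"
proof -
  have "e \<in> proj_simplex r" using ext_gens_subset_hilb hbDp assms by blast
  then have "\<exists>w. good_lift r e w" using good_lift_exists E_lattice[OF assms] by blast
  then show ?thesis unfolding lift_def by (rule someI_ex)
qed

lemma proj_lift: "e \<in> E \<Longrightarrow> proj (lift r e) = e"
  using good_lift_E unfolding good_lift_def by blast

lemma lift_lattice: "e \<in> E \<Longrightarrow> lift r e \<in> lattice d"
  using good_lift_E unfolding good_lift_def by blast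

lemma lift_coeffs:
  "e \<in> E \<Longrightarrow>
   \<exists>xi. lift r e = lincomb {..<d} xi v \<and> (\<forall>j. xi j \<ge> 0) \<and> xi 0 < 1 \<and> (\<Sum>j<d. xi j) \<le> r + 1"
  using good_lift_E unfolding good_lift_def by blast

lemma lift_inj: "inj_on (lift r) E"
proof (rule inj_onI)
  fix x y assume "x \<in> E" "y \<in> E" "lift r x = lift r y"
  then have "proj (lift r x) = proj (lift r y)" by simp
  then show "x = y" using proj_lift \<open>x \<in> E\<close> \<open>y \<in> E\<close> by simp
qed

lemma v0_notin_L: "v 0 \<notin> L"
proof
  assume "v 0 \<in> L"
  then obtain e where e: "e \<in> E" "v 0 = lift r e" by blast
  then have "proj (v 0) = proj (lift r e)" by simp
  then have "e = vzero" using proj_lift[OF e(1)] proj_v0 by simp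
  then show False using E_nonzero e by blast
qed

lemma finite_G: "finite G"
  using finite_E by simp

lemma proj_lincomb_G: "proj (lincomb G c (\<lambda>u. u)) = lincomb E (\<lambda>e. c (lift r e)) (\<lambda>u. u)"
proof -
  have finL: "finite L" using finite_E by simp
  have "proj (lincomb G c (\<lambda>u. u)) = lincomb G c proj" using proj_lincomb[OF finite_G] by simp
  also have "\<dots> = (\<lambda>i. c (v 0) * proj (v 0) i + lincomb L c proj i)"
    using lincomb_insert[OF finL v0_notin_L] by simp
  also have "\<dots> = lincomb L c proj" using proj_v0 by simp
  also have "\<dots> = lincomb E (\<lambda>e. c (lift r e)) (\<lambda>e. proj (lift r e))"
    using lincomb_reindex[OF lift_inj] by (simp add: comp_def)
  also have "\<dots> = lincomb E (\<lambda>e. c (lift r e)) (\<lambda>u. u)" by (rule lincomb_cong) (simp add: proj_lift)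
  finally show ?thesis .
qed

lemma lincomb_G_split:
  "lincomb G c (\<lambda>u. u) = (\<lambda>i. c (v 0) * v 0 i + lincomb E (\<lambda>e. c (lift r e)) (lift r) i)"
proof -
  have finL: "finite L" using finite_E by simp
  have "lincomb G c (\<lambda>u. u) = (\<lambda>i. c (v 0) * v 0 i + lincomb L c (\<lambda>u. u) i)"
    using lincomb_insert[OF finL v0_notin_L] by simp
  also have "lincomb L c (\<lambda>u. u) = lincomb E (\<lambda>e. c (lift r e)) (lift r)"
    using lincomb_reindex[OF lift_inj] by (simp add: comp_def)
  finally show ?thesis .
qed

lemma lin_indep_G: "lin_indep G"
  unfolding lin_indep_finite_iff[OF finite_G]
proof (intro allI impI)
  fix c assume c0: "lincomb G c (\<lambda>u. u) = vzero"
  have "lincomb E (\<lambda>e. c (lift r e)) (\<lambda>u. u) = lincomb E (\<lambda>_. 0) (\<lambda>u. u)"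
    using proj_lincomb_G[of c] c0 vlinear_zero[OF proj_linear] by (simp add: lincomb_def)
  then have cl: "\<And>e. e \<in> E \<Longrightarrow> c (lift r e) = 0"
    using lin_indep_coeffs_unique[OF lin_indep_E finite_E] by blast
  have "lincomb E (\<lambda>e. c (lift r e)) (lift r) = vzero" using cl by (simp add: lincomb_def)
  then have "smul (c (v 0)) (v 0) = smul 0 (v 0)" using c0 lincomb_G_split[of c]
    by (simp add: smul_def)
  then have "c (v 0) = 0" using smul_right_cancel v_nonzero[OF d0] by blast
  then show "\<forall>g\<in>G. c g = 0" using cl by blast
qed

lemma G_lattice: "G \<subseteq> lattice d"
  using v_lattice[OF d0] lift_lattice by blast

lemma G_primitive:
  assumes g: "g \<in> G"
  shows "primitive d g"
proof (cases "g = v 0")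
  case True
  then show ?thesis using v_primitive[OF d0] by simp
next
  case False
  then obtain e where e: "e \<in> E" "g = lift r e" using g by blast
  show ?thesis
    unfolding primitive_def
  proof (intro allI impI notI)
    fix t assume t: "0 < t \<and> t < 1" "smul t g \<in> lattice d"
    then have "smul t e \<in> lattice (d - 1)" using proj_lattice[OF t(2)] proj_smul e proj_lift by simp
    then show False using E_primitive[OF e(1)] t(1) unfolding primitive_def by blast
  qed
qed

lemma zero_notin_G: "vzero \<notin> G"
  using G_primitive primitive_nonzero by blast

lemma G_basis_cone: "basis_cone d G"
  unfolding basis_cone_def using finite_G G_lattice lin_indep_G G_primitive zero_notin_G by blast

lemma unimodular_G: "lattice d \<inter> lin_span G \<subseteq> int_span G"
proof
  fix x assume x: "x \<in> lattice d \<inter> lin_span G"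
  obtain c where c: "x = lincomb G c (\<lambda>u. u)" using lin_span_finite_coeffs[OF finite_G] x by blast
  have prx: "proj x = lincomb E (\<lambda>e. c (lift r e)) (\<lambda>u. u)" using c proj_lincomb_G by simp
  have "proj x \<in> lattice (d - 1)" using proj_lattice x by blast
  moreover have "proj x \<in> lin_span E" unfolding prx
    by (rule lin_span_lincomb[OF finite_E]) (auto intro: lin_span_base)
  ultimately have "proj x \<in> int_span E" using unimodular_E by blast
  then obtain n where n: "\<forall>e\<in>E. n e \<in> \<int>" "proj x = lincomb E n (\<lambda>u. u)"
    using int_span_finite_coeffs[OF finite_E] by blast
  have eqEn: "lincomb E (\<lambda>e. c (lift r e)) (\<lambda>u. u) = lincomb E n (\<lambda>u. u)" using prx n(2) by simp
  have cn: "\<And>e. e \<in> E \<Longrightarrow> c (lift r e) = n e"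
    using lin_indep_coeffs_unique[OF lin_indep_E finite_E eqEn] by blast
  have cint: "\<And>e. e \<in> E \<Longrightarrow> c (lift r e) \<in> \<int>" using cn n(1) by simp
  let ?y = "lincomb E (\<lambda>e. c (lift r e)) (lift r)"
  have yL: "?y \<in> lattice d" by (rule lattice_lincomb[OF finite_E]) (use cint lift_lattice in auto)
  have "smul (c (v 0)) (v 0) = (\<lambda>i. x i - ?y i)" using c lincomb_G_split[of c]
    by (simp add: smul_def)
  also have "\<dots> \<in> lattice d" using lattice_diff x yL by blast
  finally have "c (v 0) \<in> \<int>"
    by (rule primitive_multiple_int[OF v_lattice[OF d0] v_primitive[OF d0]])
  then have ci: "\<And>g. g \<in> G \<Longrightarrow> c g \<in> \<int>" using cint by blast
  have "lincomb G c (\<lambda>u. u) \<in> int_span G"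
    by (rule int_span_lincomb[OF finite_G]) (simp_all add: ci int_span_base)
  then show "x \<in> int_span G" using c by simp
qed

lemma G_subset_C: "G \<subseteq> C"
proof
  fix g assume "g \<in> G"
  then consider "g = v 0" | e where "e \<in> E" "g = lift r e" by blast
  then show "g \<in> C"
  proof cases
    case 1 then show ?thesis using v_in_C[OF d0] by simp
  next
    case 2
    then obtain xi where "lift r e = lincomb {..<d} xi v" "\<forall>j. xi j \<ge> 0" using lift_coeffs by blast
    then show ?thesis using 2 lincomb_v_in_C by simp
  qed
qed

lemma unimodular_lifted: "unimodular d (pos_hull G)"
  using basis_cone.unimodular[OF G_basis_cone unimodular_G] .

lemma hilb_lifted_subset: "hilb d (pos_hull G) \<subseteq> G"
  using basis_cone.hilb_subset[OF G_basis_cone unimodular_G] .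

lemma v0_in_hilb_lifted: "v 0 \<in> hilb d (pos_hull G)"
  using basis_cone.ext_gens_eq[OF G_basis_cone] ext_gens_subset_hilb by blast

lemma lifted_subset_C: "pos_hull G \<subseteq> C"
  using pos_hull_trans[of G "v ` {..<d}"] G_subset_C C_eq by simp

lemma hilb_lifted_bound:
  assumes "r \<ge> 0"
  shows "hilb d (pos_hull G) \<subseteq> scale_set (r + 1) (Delta d C)"
proof
  fix w assume "w \<in> hilb d (pos_hull G)"
  then have "w \<in> G" using hilb_lifted_subset by blast
  then obtain xi where "w = lincomb {..<d} xi v" "\<forall>j. xi j \<ge> 0" "(\<Sum>j<d. xi j) \<le> r + 1"
    using lift_coeffs v0_lincomb assms d0 by (fastforce simp: sum.delta)
  then show "w \<in> scale_set (r + 1) (Delta d C)" using lincomb_in_scaled_Delta assms by simp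
qed

lemma hilb_lifted_first_coeff:
  assumes "w \<in> hilb d (pos_hull G)" "w \<noteq> v 0"
  shows "\<exists>xi::nat \<Rightarrow> real. w = (\<lambda>i. \<Sum>j<d. xi j * v j i) \<and> xi 0 < 1"
proof -
  obtain e where "e \<in> E" "w = lift r e" using hilb_lifted_subset assms by blast
  then obtain xi where "w = lincomb {..<d} xi v" "xi 0 < 1" using lift_coeffs by blast
  then show ?thesis by (auto simp: lincomb_def)
qed

lemma mem_lifted_cone:
  assumes x: "x \<in> space d" and a: "\<forall>e\<in>E. 0 \<le> a e" and prx: "proj x = lincomb E a (\<lambda>u. u)"
    and le: "(\<Sum>e\<in>E. a e * axis_coord (lift r e)) \<le> axis_coord x"
  shows "x \<in> pos_hull G"
proof -
  define s where "s = axis_coord x - (\<Sum>e\<in>E. a e * axis_coord (lift r e))"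
  have W_lift: "W e = (\<lambda>i. lift r e i - axis_coord (lift r e) * v 0 i)" if e: "e \<in> E" for e
  proof -
    have "lift r e \<in> space d" using lift_lattice[OF e] lattice_subset_space by blast
    then have "lift r e = (\<lambda>i. W (proj (lift r e)) i + axis_coord (lift r e) * v 0 i)"
      by (rule proj_decomp)
    then show ?thesis using proj_lift[OF e] by (auto simp: fun_eq_iff)
  qed
  have "x = (\<lambda>i. W (proj x) i + axis_coord x * v 0 i)" by (rule proj_decomp[OF x])
  also have "W (proj x) = lincomb E a W" unfolding prx using vlinear_lincomb[OF W_linear finite_E]
    by simp
  also have "\<dots> = lincomb E a (\<lambda>e i. lift r e i - axis_coord (lift r e) * v 0 i)"
    by (rule lincomb_cong) (simp add: W_lift)
  finally have x0: "x = (\<lambda>i. lincomb E a (\<lambda>e i. lift r e i - axis_coord (lift r e) * v 0 i) i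
                          + axis_coord x * v 0 i)" .
  have pw: "lincomb E a (\<lambda>e i. lift r e i - axis_coord (lift r e) * v 0 i) i =
      lincomb E a (lift r) i - (\<Sum>e\<in>E. a e * axis_coord (lift r e)) * v 0 i" for i
    by (simp add: lincomb_def right_diff_distrib sum_subtractf sum_distrib_right mult.assoc)
  have "x = (\<lambda>i. lincomb E a (lift r) i + smul s (v 0) i)"
  proof
    fix i
    show "x i = lincomb E a (lift r) i + smul s (v 0) i"
      using fun_cong[OF x0, of i] pw[of i] unfolding s_def by (simp add: smul_def algebra_simps)
  qed
  also have "\<dots> \<in> pos_hull G"
    using a le unfolding s_def
    by (intro pos_hull_add pos_hull_lincomb[OF finite_E] pos_hull_smul) (auto intro: pos_hull_base)
  finally show ?thesis .
qed

end

context cone_projection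
begin

text \<open>
  A point x of C close to v 0 has small coefficients at v 1, ..., v (d-1) and v 0-coordinate
  close to 1. Writing proj x with nonnegative coefficients a over the extreme generators of a
  piece Dp, the height bound makes the a small, so x minus the corresponding combination of
  lifts is still a nonnegative multiple of v 0.
\<close>

lemma lifted_cones_cover_corner:
  assumes finDD: "finite DD" and pieces: "\<And>Dp. Dp \<in> DD \<Longrightarrow> lifted_cone d C v U W r Dp"
    and cov: "\<Union>DD = C_proj"
  shows "\<exists>eps>0. \<forall>x\<in>C. (\<forall>i<d. \<bar>x i - v 0 i\<bar> < eps) \<longrightarrow>
           (\<exists>Dp\<in>DD. x \<in> pos_hull (insert (v 0) (lift r ` ext_gens (d - 1) Dp)))"
proof -
  define F where "F = (\<Union>Dp\<in>DD. ext_gens (d - 1) Dp)"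
  have F: "finite F" "F \<subseteq> C_proj" "vzero \<notin> F"
    using finDD lifted_cone.finite_E[OF pieces] cov
    unfolding F_def ext_gens_def extreme_ray_def by auto
  obtain \<delta> where \<delta>: "\<delta> > 0"
    "\<And>E a xi. E \<subseteq> F \<Longrightarrow> \<forall>e\<in>E. 0 \<le> a e \<Longrightarrow> proj (lincomb {..<d} xi v) = lincomb E a (\<lambda>u. u) \<Longrightarrow>
       \<delta> * (\<Sum>e\<in>E. a e) \<le> (\<Sum>k\<in>{1..<d}. xi k)"
    using height_lower_bound[OF F] by blast
  obtain K where K: "K \<ge> 0"
    "\<And>x xi e. x = lincomb {..<d} xi v \<Longrightarrow> \<forall>i<d. \<bar>x i - v 0 i\<bar> \<le> e \<Longrightarrow>
       (\<Sum>k\<in>{1..<d}. xi k) \<le> e * K \<and> 1 - e * K \<le> axis_coord x"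
    using near_v0_bounds by blast
  define M where "M = Max (insert 0 ((\<lambda>e. \<bar>axis_coord (lift r e)\<bar>) ` F))"
  have M: "M \<ge> 0" "\<And>e. e \<in> F \<Longrightarrow> \<bar>axis_coord (lift r e)\<bar> \<le> M"
    unfolding M_def using F(1) by auto
  define Q where "Q = K + K * M / \<delta>"
  have Q: "0 \<le> Q" unfolding Q_def using K(1) M(1) \<delta>(1) by simp
  define eps where "eps = 1 / (2 * (Q + 1))"
  have eps: "eps > 0" "eps * Q \<le> 1" unfolding eps_def using Q by (auto simp: field_simps)
  show ?thesis
  proof (intro exI[of _ eps] conjI eps(1) ballI impI)
    fix x assume xC: "x \<in> C" and near: "\<forall>i<d. \<bar>x i - v 0 i\<bar> < eps"
    obtain xi where xi: "x = lincomb {..<d} xi v" using C_coords[OF xC] by blast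
    have bounds: "(\<Sum>k\<in>{1..<d}. xi k) \<le> eps * K" "1 - eps * K \<le> axis_coord x"
      using K(2)[OF xi] near by (auto simp: less_imp_le)
    obtain Dp where Dp: "Dp \<in> DD" "proj x \<in> Dp" using cov xC unfolding C_proj_def by blast
    interpret P: lifted_cone d C v U W r Dp by (rule pieces[OF Dp(1)])
    have EF: "P.E \<subseteq> F" unfolding F_def using Dp(1) by blast
    obtain a where a: "\<forall>e\<in>P.E. a e \<ge> 0" "proj x = lincomb P.E a (\<lambda>u. u)"
      using pos_hull_finite_coeffs[OF P.finite_E] Dp(2) P.Dp_eq by blast
    have "\<delta> * (\<Sum>e\<in>P.E. a e) \<le> (\<Sum>k\<in>{1..<d}. xi k)"
      using \<delta>(2)[OF EF a(1) a(2)[unfolded xi]] .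
    then have "\<delta> * (\<Sum>e\<in>P.E. a e) \<le> eps * K" using bounds(1) by linarith
    then have "(\<Sum>e\<in>P.E. a e) \<le> eps * K / \<delta>" using \<delta>(1) by (simp add: field_simps)
    from mult_right_mono[OF this M(1)]
    have sa: "(\<Sum>e\<in>P.E. a e) * M \<le> eps * (K * M / \<delta>)" by (simp add: mult.assoc)
    have "(\<Sum>e\<in>P.E. a e * axis_coord (lift r e)) \<le> (\<Sum>e\<in>P.E. a e) * M"
      unfolding sum_distrib_right
      by (rule sum_mono, rule mult_left_mono) (use a(1) M(2) EF in \<open>auto dest: abs_le_D1\<close>)
    also have "\<dots> \<le> axis_coord x"
      using sa bounds(2) eps(2) unfolding Q_def by (simp add: algebra_simps)
    finally have "x \<in> pos_hull P.G"
      using P.mem_lifted_cone[OF _ a] xC C_space by blast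
    then show "\<exists>Dp\<in>DD. x \<in> pos_hull (insert (v 0) (lift r ` ext_gens (d - 1) Dp))"
      using Dp(1) by blast
  qed
qed

lemma lifted_cone_of_cover_piece:
  assumes "unimodular (d - 1) D" "hilb (d - 1) D \<subseteq> scale_set r (Delta (d - 1) C_proj)" "r \<ge> 0"
  shows "lifted_cone d C v U W r D"
proof -
  have "hilb (d - 1) D \<subseteq> scale_set r (proj_simplex 1)"
    using assms(2) Delta_C_proj_simplex unfolding scale_set_def by blast
  also have "\<dots> \<subseteq> proj_simplex r" by (rule scale_proj_simplex[OF assms(3)])
  finally show ?thesis
    using assms(1) by (intro lifted_cone.intro cone_projection_axioms lifted_cone_axioms.intro)
qed

lemma corner_cover:
  assumes "cone_const_ok (d - 1) c"
  shows "\<exists>\<C>. finite \<C> \<and> (\<forall>D\<in>\<C>. unimodular d D) \<and> covers_corner d C (v 0) \<C> \<and>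
     (\<forall>D\<in>\<C>. hilb d D \<subseteq> scale_set (real c + 1) (Delta d C)) \<and>
     (\<forall>D\<in>\<C>. \<forall>w\<in>hilb d D. w \<noteq> v 0 \<longrightarrow>
        (\<exists>\<xi>::nat \<Rightarrow> real. w = (\<lambda>i. \<Sum>j<d. \<xi> j * v j i) \<and> \<xi> 0 < 1))"
proof -
  have "\<exists>DD. finite DD \<and> (\<forall>D\<in>DD. unimodular (d - 1) D) \<and> \<Union>DD = C_proj \<and>
      (\<forall>D\<in>DD. hilb (d - 1) D \<subseteq> scale_set (real c) (Delta (d - 1) C_proj))"
    by (rule assms[unfolded cone_const_ok_def, rule_format])
      (use C_proj_rational C_proj_full_dim in blast)
  then obtain DD where DD: "finite DD" "\<forall>D\<in>DD. unimodular (d - 1) D" "\<Union>DD = C_proj"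
    "\<forall>D\<in>DD. hilb (d - 1) D \<subseteq> scale_set (real c) (Delta (d - 1) C_proj)"
    by blast
  have pieces: "lifted_cone d C v U W (real c) D" if "D \<in> DD" for D
    using DD(2,4) that by (intro lifted_cone_of_cover_piece) auto
  define lifted where
    "lifted D = pos_hull (insert (v 0) (lift (real c) ` ext_gens (d - 1) D))" for D
  have "covers_corner d C (v 0) (lifted ` DD)"
    unfolding covers_corner_def
  proof (intro conjI ballI)
    fix X assume "X \<in> lifted ` DD"
    then show "X \<subseteq> C" unfolding lifted_def using lifted_cone.lifted_subset_C[OF pieces] by blast
  next
    fix X assume "X \<in> lifted ` DD"
    then show "v 0 \<in> hilb d X"
      unfolding lifted_def using lifted_cone.v0_in_hilb_lifted[OF pieces] by blast
  next
    have "\<exists>eps>0. \<forall>x\<in>C. (\<forall>i<d. \<bar>x i - v 0 i\<bar> < eps) \<longrightarrow> (\<exists>D\<in>DD. x \<in> lifted D)"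
      unfolding lifted_def by (rule lifted_cones_cover_corner[OF DD(1) pieces DD(3)])
    then show "\<exists>\<epsilon>>0. \<forall>x\<in>C. (\<forall>i<d. \<bar>x i - v 0 i\<bar> < \<epsilon>) \<longrightarrow> x \<in> \<Union>(lifted ` DD)"
      unfolding UN_iff .
  qed
  moreover have "\<forall>X\<in>lifted ` DD. unimodular d X"
    using lifted_cone.unimodular_lifted[OF pieces] unfolding lifted_def by blast
  moreover have "\<forall>X\<in>lifted ` DD. hilb d X \<subseteq> scale_set (real c + 1) (Delta d C)"
    using lifted_cone.hilb_lifted_bound[OF pieces] unfolding lifted_def by simp
  moreover have "\<forall>X\<in>lifted ` DD. \<forall>w\<in>hilb d X. w \<noteq> v 0 \<longrightarrow>
      (\<exists>\<xi>::nat \<Rightarrow> real. w = (\<lambda>i. \<Sum>j<d. \<xi> j * v j i) \<and> \<xi> 0 < 1)"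
    using lifted_cone.hilb_lifted_first_coeff[OF pieces] unfolding lifted_def by blast
  ultimately show ?thesis using DD(1) by (intro exI[of _ "lifted ` DD"]) simp
qed

end

lemma cone_const_finite:
  assumes "cone_const e < \<infinity>"
  obtains c where "cone_const_ok e c" "cone_const e = enat c"
proof -
  have ne: "enat ` {c. cone_const_ok e c} \<noteq> {}"
    using assms unfolding cone_const_def by (metis Inf_empty top_enat_def less_irrefl)
  have "cone_const e \<in> enat ` {c. cone_const_ok e c}"
    unfolding cone_const_def Inf_enat_def using ne by (auto intro: LeastI)
  then show ?thesis using that by blast
qed

theorem lemma5p1:
  fixes d :: nat and C :: "vec set" and v :: "nat \<Rightarrow> vec"
  assumes fin: "cone_const (d - 1) < \<infinity>"
    and d1: "d \<ge> 1"
    and rat: "rational_cone d C" and fd: "full_dim d C" and simp: "simplicial d C"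
    and inj: "inj_on v {..<d}" and gens: "v ` {..<d} = ext_gens d C"
  shows "\<exists>\<C>. finite \<C> \<and> (\<forall>D\<in>\<C>. unimodular d D) \<and> covers_corner d C (v 0) \<C> \<and>
     (\<forall>D\<in>\<C>. hilb d D \<subseteq>
        scale_set (real (the_enat (cone_const (d - 1)) + 1)) (Delta d C)) \<and>
     (\<forall>D\<in>\<C>. \<forall>w\<in>hilb d D. w \<noteq> v 0 \<longrightarrow>
        (\<exists>\<xi>::nat \<Rightarrow> real. w = (\<lambda>i. \<Sum>j<d. \<xi> j * v j i) \<and> \<xi> 0 < 1))"
proof -
  obtain c where c: "cone_const_ok (d - 1) c" "cone_const (d - 1) = enat c"
    using cone_const_finite[OF fin] by blast
  have "v 0 \<in> ext_gens d C" using gens d1 by force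
  then have "v 0 \<in> lattice d" "primitive d (v 0)" unfolding ext_gens_primitive by auto
  then obtain U W where "lattice_aut d U W" "U (v 0) = unit_vec (d - 1)"
    using primitive_to_axis[OF d1] by blast
  then interpret cone_projection d C v U W
    using d1 rat fd simp inj gens by unfold_locales
  show ?thesis using corner_cover[OF c(1)] c(2) by (simp add: add.commute)
qed

end
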